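(* Let $r:s_1\ldots s_n\to\mathsf{Fact}$ be a fact constructor, let $Q$ be a query, and let $\vec x=x_1,\dots,x_n$ be distinct variables with $x_i$ of sort $s_i$ and $\{\vec x\}\cap\mathrm{Var}(Q)=\emptyset$. Then there exists a condition $\varphi^{\vec x\mid r}_Q$ such that for all ground finite multisets of facts $F$ and all ground substitutions $\sigma=\{\vec t/\vec x,\vec a/\vec v\}$ for which $\{\vec a/\vec v\}(Q)$ is closed, the condition $\sigma(\varphi^{\vec x\mid r}_Q)$ is closed, and $\mathrm{Init}_{\sigma(\varphi^{\vec x\mid r}_Q)}(F)\to^!\mathrm{Sat}(\mathsf{true})$ iff there is $F'$ with $\mathrm{Init}_{\{\vec a/\vec v\}(Q)}(F)\to^!\mathrm{Ans}(F'\circ r(\vec t))$, and $\mathrm{Init}_{\sigma(\varphi^{\vec x\mid r}_Q)}(F)\to^!\mathrm{Sat}(\mathsf{false})$ iff there is $F'$ with $r(\vec t)\notin F'$ and $\mathrm{Init}_{\{\vec a/\vec v\}(Q)}(F)\to^!\mathrm{Ans}(F')$. Moreover, if $Q$ is deterministic, then so is $\varphi^{\vec x\mid r}_Q$.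
   Context: Setting. Fix an order-sorted signature $\Sigma$ with sorts $\mathsf{Fact}$, $\mathsf{Bool}$ and a $\Sigma$-algebra of facts $\mathcal{D}$ presented by structural axioms $A$ and confluent terminating equations, providing Boolean connectives and Boolean-valued equality on every sort; every ground $\mathsf{Bool}$ term reduces to $\mathsf{true}$ or $\mathsf{false}$. Multisets of facts: associative commutative $\circ$ with identity $\emptyset$. A terminating and preserving pattern $P$ is $[F_1]_!\circ[F_2]_?$ or $[F_2]_?$ ($F_1,F_2$ non-empty, possibly non-ground, multisets of facts); $P_!,P_?$ are the wrapped multisets ($P_!=\emptyset$ if absent). Conditions: $\mathrm{False}$, $\{B\}$, $\neg\psi$, $\psi_1\vee\psi_2$, $\exists P.\psi$ (binding in $\psi$ the variables of $P$ not bound by the context). Condition-evaluation stacks consist of frames $\mathrm{Res}(B)$, $\mathrm{Not}$, $[\vec a]^{\vec v}_\psi$, $[\vec a]^{\vec v,\downarrow}_\psi$, $[F'\mid\vec a]^{\vec v}_{\exists P.\psi}$ ($\sigma=\{\vec a/\vec v\}$); rules ("$X\mapsto Y$" meaning $\{F,S\,X\}^c\to\{F,S\,Y\}^c$, $F$ the database): $[\vec a]_{\mathrm{False}}\mapsto\mathrm{Res}(\mathsf{false})$; $[\vec a]_{\{B\}}\mapsto\mathrm{Res}(\sigma(B))$; $[\vec a]_{\neg\psi}\mapsto\mathrm{Not}[\vec a]_\psi$; $\mathrm{Not}\,\mathrm{Res}(B)\mapsto\mathrm{Res}(\neg B)$; $[\vec a]_{\psi_1\vee\psi_2}\mapsto[\vec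 a]^\downarrow_{\psi_1}[\vec a]_{\psi_2}$; $[\vec a]^\downarrow_\psi\mathrm{Res}(\mathsf{true})\mapsto\mathrm{Res}(\mathsf{true})$; $[\vec a]^\downarrow_\psi\mathrm{Res}(\mathsf{false})\mapsto[\vec a]_\psi$; $[\vec a]_{\exists P.\psi}\mapsto[F\mid\vec a]_{\exists P.\psi}$; if $\vec w$ lists the variables of $P$ not in $\vec v$, $\sigma'=\{\vec a/\vec v,\vec b/\vec w\}$, $F'=F''\circ\sigma'(P_!\circ P_?)$: $[F'\mid\vec a]_{\exists P.\psi}\mapsto[F''\circ\sigma'(P_!)\mid\vec a]_{\exists P.\psi}[\vec a,\vec b]^{\vec v,\vec w}_\psi$; $[F'\mid\vec a]_{\exists P.\psi}\mathrm{Res}(\mathsf{false})\mapsto[F'\mid\vec a]_{\exists P.\psi}$; $[F'\mid\vec a]_{\exists P.\psi}\mathrm{Res}(\mathsf{true})\mapsto\mathrm{Res}(\mathsf{true})$; if no matching exists, $[F'\mid\vec a]_{\exists P.\psi}\mapsto\mathrm{Res}(\mathsf{false})$; finally $\{F,\mathrm{Res}(B)\}^c\to\mathrm{Sat}(B)$. $\mathrm{Init}_\varphi(F):=\{F,[\,]_\varphi\}^c$. Queries: $\emptyset$; facts $f$; $Q_1\oplus Q_2$; $\varphi\Rightarrow Q$; $\mathrm{From}\,P.Q$ ($P$ terminating and preserving, binding like $\exists$). Query system: states $\{F,F',S\}^q$, terminal $\mathrm{Ans}(F')$; with "$X\mapsto Y$" meaning $\{F,F',S\,X\}^q\to\{F,F',S\,Y\}^q$: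 $\{F,F',S[\vec a]_f\}^q\to\{F,F'\circ\sigma(f),S\}^q$; $[\vec a]_\emptyset\mapsto$ (nothing); $[\vec a]_{R_1\oplus R_2}\mapsto[\vec a]_{R_2}[\vec a]_{R_1}$; $[\vec a]_{\varphi\Rightarrow R}\mapsto[\vec a\mid[\vec a]^{\vec v}_\varphi]_R$; $[\vec a\mid\mathrm{Res}(\mathsf{false})]_R\mapsto$ (nothing); $[\vec a\mid\mathrm{Res}(\mathsf{true})]_R\mapsto[\vec a]_R$; for each condition rule $\{F,S'\}^c\to\{F,S''\}^c$, $[\vec a\mid S']_R\mapsto[\vec a\mid S'']_R$; $[\vec a]_{\mathrm{From}\,P.R}\mapsto[F\mid\vec a]_{\mathrm{From}\,P.R}$; if $F''=H\circ\sigma'(P_!\circ P_?)$ then $[F''\mid\vec a]_{\mathrm{From}\,P.R}\mapsto[H\circ\sigma'(P_!)\mid\vec a]_{\mathrm{From}\,P.R}[\vec a,\vec b]^{\vec v,\vec w}_R$; if no matching exists, $[F''\mid\vec a]_{\mathrm{From}\,P.R}\mapsto$ (nothing); $\{F,F',\text{empty}\}^q\to\mathrm{Ans}(F')$. $\mathrm{Init}_Q(F):=\{F,\emptyset,[\,]_Q\}^q$. $t\to^!t'$ means $t\to^*t'$ with $t'$ irreducible. $\mathrm{Var}(t)$ is the set of variables of $t$; a condition/query is closed if all its variables are bound by enclosing patterns. A fully reduced fact term $t$ has the unique matching property if for every ground fully reduced fact $t'$ there is at most one substitution $\sigma$ with $\sigma(t)=t'$; a condition or query is deterministic if all its quantification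 patterns (including those inside conditions) consist of a single fact with the unique matching property. *)

theory Defs
  imports Main "HOL-Library.Multiset"
begin

datatype ('f,'v) trm = Var 'v | Fn 'f "('f,'v) trm list"

fun vars :: "('f,'v) trm \<Rightarrow> 'v set" where
  "vars (Var x) = {x}"
| "vars (Fn f ts) = (\<Union>t\<in>set ts. vars t)"

definition ground :: "('f,'v) trm \<Rightarrow> bool" where
  "ground t \<longleftrightarrow> vars t = {}"

type_synonym ('f,'v) sbst = "'v \<rightharpoonup> ('f,'v) trm"

fun subst :: "('f,'v) sbst \<Rightarrow> ('f,'v) trm \<Rightarrow> ('f,'v) trm" where
  "subst \<sigma> (Var x) = (case \<sigma> x of None \<Rightarrow> Var x | Some t \<Rightarrow> t)"
| "subst \<sigma> (Fn f ts) = Fn f (map (subst \<sigma>) ts)"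

text \<open>The fixed setting: order-sorted signature (subsort order, possibly overloaded
  ranks, sorts of variables), the sorts Fact and Bool, the Boolean connectives,
  Boolean-valued equality on every sort, and the algebra of facts D, represented by
  a canonical-form function (reduction to normal form modulo A).\<close>
record ('s,'f,'v) setting =
  leq :: "'s \<Rightarrow> 's \<Rightarrow> bool"
  ranks :: "'f \<Rightarrow> ('s list \<times> 's) set"
  vsort :: "'v \<Rightarrow> 's"
  sFact :: 's
  sBool :: 's
  tt :: 'f
  ff :: 'f
  neg :: 'f
  conj :: 'f
  disj :: 'f
  eqs :: "'s \<Rightarrow> 'f"
  canon :: "('f,'v) trm \<Rightarrow> ('f,'v) trm"

inductive has_sort :: "('s,'f,'v) setting \<Rightarrow> ('f,'v) trm \<Rightarrow> 's \<Rightarrow> bool" for \<Sigma> where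
  hs_var: "leq \<Sigma> (vsort \<Sigma> x) s \<Longrightarrow> has_sort \<Sigma> (Var x) s"
| hs_fn: "(ss, s0) \<in> ranks \<Sigma> f \<Longrightarrow> length ts = length ss \<Longrightarrow>
          (\<forall>i<length ts. has_sort \<Sigma> (ts ! i) (ss ! i)) \<Longrightarrow> leq \<Sigma> s0 s \<Longrightarrow>
          has_sort \<Sigma> (Fn f ts) s"

abbreviation TT :: "('s,'f,'v) setting \<Rightarrow> ('f,'v) trm" where "TT \<Sigma> \<equiv> Fn (tt \<Sigma>) []"
abbreviation FF :: "('s,'f,'v) setting \<Rightarrow> ('f,'v) trm" where "FF \<Sigma> \<equiv> Fn (ff \<Sigma>) []"

definition valid_setting :: "('s,'f,'v) setting \<Rightarrow> bool" where
  "valid_setting \<Sigma> \<longleftrightarrow>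
     (\<forall>s. leq \<Sigma> s s) \<and> (\<forall>s1 s2 s3. leq \<Sigma> s1 s2 \<longrightarrow> leq \<Sigma> s2 s3 \<longrightarrow> leq \<Sigma> s1 s3) \<and>
     (\<forall>s1 s2. leq \<Sigma> s1 s2 \<longrightarrow> leq \<Sigma> s2 s1 \<longrightarrow> s1 = s2) \<and>
     ([], sBool \<Sigma>) \<in> ranks \<Sigma> (tt \<Sigma>) \<and> ([], sBool \<Sigma>) \<in> ranks \<Sigma> (ff \<Sigma>) \<and>
     ([sBool \<Sigma>], sBool \<Sigma>) \<in> ranks \<Sigma> (neg \<Sigma>) \<and>
     ([sBool \<Sigma>, sBool \<Sigma>], sBool \<Sigma>) \<in> ranks \<Sigma> (conj \<Sigma>) \<and>
     ([sBool \<Sigma>, sBool \<Sigma>], sBool \<Sigma>) \<in> ranks \<Sigma> (disj \<Sigma>) \<and>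
     (\<forall>s. ([s, s], sBool \<Sigma>) \<in> ranks \<Sigma> (eqs \<Sigma> s)) \<and>
     tt \<Sigma> \<noteq> ff \<Sigma> \<and>
     \<comment> \<open>canonical forms of ground terms (the algebra D)\<close>
     (\<forall>t. ground t \<longrightarrow> ground (canon \<Sigma> t) \<and> canon \<Sigma> (canon \<Sigma> t) = canon \<Sigma> t) \<and>
     (\<forall>t s. ground t \<longrightarrow> has_sort \<Sigma> t s \<longrightarrow> has_sort \<Sigma> (canon \<Sigma> t) s) \<and>
     (\<forall>f ts. ground (Fn f ts) \<longrightarrow> canon \<Sigma> (Fn f ts) = canon \<Sigma> (Fn f (map (canon \<Sigma>) ts))) \<and>
     canon \<Sigma> (TT \<Sigma>) = TT \<Sigma> \<and> canon \<Sigma> (FF \<Sigma>) = FF \<Sigma> \<and>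
     \<comment> \<open>every ground Bool term reduces to true or false\<close>
     (\<forall>b. ground b \<longrightarrow> has_sort \<Sigma> b (sBool \<Sigma>) \<longrightarrow> canon \<Sigma> b = TT \<Sigma> \<or> canon \<Sigma> b = FF \<Sigma>) \<and>
     \<comment> \<open>Boolean connectives\<close>
     (\<forall>b. ground b \<longrightarrow> has_sort \<Sigma> b (sBool \<Sigma>) \<longrightarrow>
        (canon \<Sigma> (Fn (neg \<Sigma>) [b]) = TT \<Sigma> \<longleftrightarrow> canon \<Sigma> b = FF \<Sigma>)) \<and>
     (\<forall>a b. ground a \<longrightarrow> ground b \<longrightarrow> has_sort \<Sigma> a (sBool \<Sigma>) \<longrightarrow> has_sort \<Sigma> b (sBool \<Sigma>) \<longrightarrow>
        (canon \<Sigma> (Fn (conj \<Sigma>) [a, b]) = TT \<Sigma> \<longleftrightarrow> canon \<Sigma> a = TT \<Sigma> \<and> canon \<Sigma> b = TT \<Sigma>)) \<and>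
     (\<forall>a b. ground a \<longrightarrow> ground b \<longrightarrow> has_sort \<Sigma> a (sBool \<Sigma>) \<longrightarrow> has_sort \<Sigma> b (sBool \<Sigma>) \<longrightarrow>
        (canon \<Sigma> (Fn (disj \<Sigma>) [a, b]) = TT \<Sigma> \<longleftrightarrow> canon \<Sigma> a = TT \<Sigma> \<or> canon \<Sigma> b = TT \<Sigma>)) \<and>
     \<comment> \<open>Boolean-valued equality on every sort\<close>
     (\<forall>s a b. ground a \<longrightarrow> ground b \<longrightarrow> has_sort \<Sigma> a s \<longrightarrow> has_sort \<Sigma> b s \<longrightarrow>
        (canon \<Sigma> (Fn (eqs \<Sigma> s) [a, b]) = TT \<Sigma> \<longleftrightarrow> canon \<Sigma> a = canon \<Sigma> b))"

definition gsub :: "('s,'f,'v) setting \<Rightarrow> ('f,'v) sbst \<Rightarrow> 'v set \<Rightarrow> bool" where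
  "gsub \<Sigma> \<sigma> V \<longleftrightarrow> dom \<sigma> = V \<and>
     (\<forall>v b. \<sigma> v = Some b \<longrightarrow> ground b \<and> has_sort \<Sigma> b (vsort \<Sigma> v))"

definition db :: "('s,'f,'v) setting \<Rightarrow> ('f,'v) trm multiset \<Rightarrow> bool" where
  "db \<Sigma> F \<longleftrightarrow> (\<forall>f\<in>#F. ground f \<and> has_sort \<Sigma> f (sFact \<Sigma>) \<and> canon \<Sigma> f = f)"

text \<open>A pattern [F1]_! o [F2]_? (pbang = F1, empty if absent; pquery = F2).\<close>
datatype ('f,'v) pat = Pat (pbang: "('f,'v) trm multiset") (pquery: "('f,'v) trm multiset")

definition pvars :: "('f,'v) pat \<Rightarrow> 'v set" where
  "pvars P = (\<Union>t\<in>set_mset (pbang P + pquery P). vars t)"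

definition psubst :: "('f,'v) sbst \<Rightarrow> ('f,'v) pat \<Rightarrow> ('f,'v) pat" where
  "psubst \<sigma> P = Pat (image_mset (subst \<sigma>) (pbang P)) (image_mset (subst \<sigma>) (pquery P))"

definition wf_pat :: "('s,'f,'v) setting \<Rightarrow> ('f,'v) pat \<Rightarrow> bool" where
  "wf_pat \<Sigma> P \<longleftrightarrow> pquery P \<noteq> {#} \<and> (\<forall>t\<in>#pbang P + pquery P. has_sort \<Sigma> t (sFact \<Sigma>))"

datatype ('f,'v) cond = CFalse | CAtom "('f,'v) trm" | CNot "('f,'v) cond"
  | COr "('f,'v) cond" "('f,'v) cond" | CEx "('f,'v) pat" "('f,'v) cond"

datatype ('f,'v) query = QEmpty | QFact "('f,'v) trm" | QPlus "('f,'v) query" "('f,'v) query"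
  | QImp "('f,'v) cond" "('f,'v) query" | QFrom "('f,'v) pat" "('f,'v) query"

fun cvars :: "('f,'v) cond \<Rightarrow> 'v set" where
  "cvars CFalse = {}"
| "cvars (CAtom B) = vars B"
| "cvars (CNot \<psi>) = cvars \<psi>"
| "cvars (COr \<psi>1 \<psi>2) = cvars \<psi>1 \<union> cvars \<psi>2"
| "cvars (CEx P \<psi>) = pvars P \<union> cvars \<psi>"

fun qvars :: "('f,'v) query \<Rightarrow> 'v set" where
  "qvars QEmpty = {}"
| "qvars (QFact f) = vars f"
| "qvars (QPlus R1 R2) = qvars R1 \<union> qvars R2"
| "qvars (QImp \<phi> R) = cvars \<phi> \<union> qvars R"
| "qvars (QFrom P R) = pvars P \<union> qvars R"

fun csubst :: "('f,'v) sbst \<Rightarrow> ('f,'v) cond \<Rightarrow> ('f,'v) cond" where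
  "csubst \<sigma> CFalse = CFalse"
| "csubst \<sigma> (CAtom B) = CAtom (subst \<sigma> B)"
| "csubst \<sigma> (CNot \<psi>) = CNot (csubst \<sigma> \<psi>)"
| "csubst \<sigma> (COr \<psi>1 \<psi>2) = COr (csubst \<sigma> \<psi>1) (csubst \<sigma> \<psi>2)"
| "csubst \<sigma> (CEx P \<psi>) = CEx (psubst \<sigma> P) (csubst \<sigma> \<psi>)"

fun qsubst :: "('f,'v) sbst \<Rightarrow> ('f,'v) query \<Rightarrow> ('f,'v) query" where
  "qsubst \<sigma> QEmpty = QEmpty"
| "qsubst \<sigma> (QFact f) = QFact (subst \<sigma> f)"
| "qsubst \<sigma> (QPlus R1 R2) = QPlus (qsubst \<sigma> R1) (qsubst \<sigma> R2)"
| "qsubst \<sigma> (QImp \<phi> R) = QImp (csubst \<sigma> \<phi>) (qsubst \<sigma> R)"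
| "qsubst \<sigma> (QFrom P R) = QFrom (psubst \<sigma> P) (qsubst \<sigma> R)"

fun cclosed :: "'v set \<Rightarrow> ('f,'v) cond \<Rightarrow> bool" where
  "cclosed V CFalse = True"
| "cclosed V (CAtom B) = (vars B \<subseteq> V)"
| "cclosed V (CNot \<psi>) = cclosed V \<psi>"
| "cclosed V (COr \<psi>1 \<psi>2) = (cclosed V \<psi>1 \<and> cclosed V \<psi>2)"
| "cclosed V (CEx P \<psi>) = cclosed (V \<union> pvars P) \<psi>"

fun qclosed :: "'v set \<Rightarrow> ('f,'v) query \<Rightarrow> bool" where
  "qclosed V QEmpty = True"
| "qclosed V (QFact f) = (vars f \<subseteq> V)"
| "qclosed V (QPlus R1 R2) = (qclosed V R1 \<and> qclosed V R2)"
| "qclosed V (QImp \<phi> R) = (cclosed V \<phi> \<and> qclosed V R)"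
| "qclosed V (QFrom P R) = qclosed (V \<union> pvars P) R"

fun wf_cond :: "('s,'f,'v) setting \<Rightarrow> ('f,'v) cond \<Rightarrow> bool" where
  "wf_cond \<Sigma> CFalse = True"
| "wf_cond \<Sigma> (CAtom B) = has_sort \<Sigma> B (sBool \<Sigma>)"
| "wf_cond \<Sigma> (CNot \<psi>) = wf_cond \<Sigma> \<psi>"
| "wf_cond \<Sigma> (COr \<psi>1 \<psi>2) = (wf_cond \<Sigma> \<psi>1 \<and> wf_cond \<Sigma> \<psi>2)"
| "wf_cond \<Sigma> (CEx P \<psi>) = (wf_pat \<Sigma> P \<and> wf_cond \<Sigma> \<psi>)"

fun wf_query :: "('s,'f,'v) setting \<Rightarrow> ('f,'v) query \<Rightarrow> bool" where
  "wf_query \<Sigma> QEmpty = True"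
| "wf_query \<Sigma> (QFact f) = has_sort \<Sigma> f (sFact \<Sigma>)"
| "wf_query \<Sigma> (QPlus R1 R2) = (wf_query \<Sigma> R1 \<and> wf_query \<Sigma> R2)"
| "wf_query \<Sigma> (QImp \<phi> R) = (wf_cond \<Sigma> \<phi> \<and> wf_query \<Sigma> R)"
| "wf_query \<Sigma> (QFrom P R) = (wf_pat \<Sigma> P \<and> wf_query \<Sigma> R)"

definition unique_matching :: "('s,'f,'v) setting \<Rightarrow> ('f,'v) trm \<Rightarrow> bool" where
  "unique_matching \<Sigma> t \<longleftrightarrow> canon \<Sigma> t = t \<and>
     (\<forall>t' \<sigma>1 \<sigma>2. ground t' \<and> canon \<Sigma> t' = t' \<and> has_sort \<Sigma> t' (sFact \<Sigma>) \<and>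
        gsub \<Sigma> \<sigma>1 (vars t) \<and> gsub \<Sigma> \<sigma>2 (vars t) \<and>
        canon \<Sigma> (subst \<sigma>1 t) = t' \<and> canon \<Sigma> (subst \<sigma>2 t) = t' \<longrightarrow>
        (\<forall>v\<in>vars t. canon \<Sigma> (the (\<sigma>1 v)) = canon \<Sigma> (the (\<sigma>2 v))))"

definition det_pat :: "('s,'f,'v) setting \<Rightarrow> ('f,'v) pat \<Rightarrow> bool" where
  "det_pat \<Sigma> P \<longleftrightarrow> pbang P = {#} \<and> (\<exists>t. pquery P = {#t#} \<and> unique_matching \<Sigma> t)"

fun cdet :: "('s,'f,'v) setting \<Rightarrow> ('f,'v) cond \<Rightarrow> bool" where
  "cdet \<Sigma> CFalse = True"
| "cdet \<Sigma> (CAtom B) = True"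
| "cdet \<Sigma> (CNot \<psi>) = cdet \<Sigma> \<psi>"
| "cdet \<Sigma> (COr \<psi>1 \<psi>2) = (cdet \<Sigma> \<psi>1 \<and> cdet \<Sigma> \<psi>2)"
| "cdet \<Sigma> (CEx P \<psi>) = (det_pat \<Sigma> P \<and> cdet \<Sigma> \<psi>)"

fun qdet :: "('s,'f,'v) setting \<Rightarrow> ('f,'v) query \<Rightarrow> bool" where
  "qdet \<Sigma> QEmpty = True"
| "qdet \<Sigma> (QFact f) = True"
| "qdet \<Sigma> (QPlus R1 R2) = (qdet \<Sigma> R1 \<and> qdet \<Sigma> R2)"
| "qdet \<Sigma> (QImp \<phi> R) = (cdet \<Sigma> \<phi> \<and> qdet \<Sigma> R)"
| "qdet \<Sigma> (QFrom P R) = (det_pat \<Sigma> P \<and> qdet \<Sigma> R)"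

definition match_ext :: "('s,'f,'v) setting \<Rightarrow> ('f,'v) sbst \<Rightarrow> ('f,'v) pat \<Rightarrow> ('f,'v) sbst \<Rightarrow> bool" where
  "match_ext \<Sigma> \<sigma> P \<beta> \<longleftrightarrow> gsub \<Sigma> \<beta> (pvars P - dom \<sigma>)"

definition inst :: "('s,'f,'v) setting \<Rightarrow> ('f,'v) sbst \<Rightarrow> ('f,'v) trm multiset \<Rightarrow> ('f,'v) trm multiset" where
  "inst \<Sigma> \<sigma> M = image_mset (\<lambda>t. canon \<Sigma> (subst \<sigma> t)) M"

definition has_match :: "('s,'f,'v) setting \<Rightarrow> ('f,'v) trm multiset \<Rightarrow> ('f,'v) sbst \<Rightarrow> ('f,'v) pat \<Rightarrow> bool" where
  "has_match \<Sigma> F' \<sigma> P \<longleftrightarrow> (\<exists>\<beta> F''. match_ext \<Sigma> \<sigma> P \<beta> \<and>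
      F' = F'' + inst \<Sigma> (\<sigma> ++ \<beta>) (pbang P + pquery P))"

text \<open>Stacks are lists whose head is the top of the stack (the rightmost frame in the paper).
  Frames: Res(B), Not, [a]_psi, [a]^down_psi, [F'|a]_{Ex P.psi}; substitutions are maps.\<close>
datatype ('f,'v) cframe = Res "('f,'v) trm" | NotF | Ev "('f,'v) sbst" "('f,'v) cond"
  | EvD "('f,'v) sbst" "('f,'v) cond"
  | ExF "('f,'v) trm multiset" "('f,'v) sbst" "('f,'v) pat" "('f,'v) cond"

datatype ('f,'v) cstate = CSt "('f,'v) trm multiset" "('f,'v) cframe list" | Sat "('f,'v) trm"

inductive cstep :: "('s,'f,'v) setting \<Rightarrow> ('f,'v) trm multiset \<Rightarrow> ('f,'v) cframe list \<Rightarrow> ('f,'v) cframe list \<Rightarrow> bool"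
  for \<Sigma> F where
  c_false: "cstep \<Sigma> F (Ev \<sigma> CFalse # S) (Res (FF \<Sigma>) # S)"
| c_atom: "cstep \<Sigma> F (Ev \<sigma> (CAtom B) # S) (Res (canon \<Sigma> (subst \<sigma> B)) # S)"
| c_not: "cstep \<Sigma> F (Ev \<sigma> (CNot \<psi>) # S) (Ev \<sigma> \<psi> # NotF # S)"
| c_notres: "cstep \<Sigma> F (Res B # NotF # S) (Res (canon \<Sigma> (Fn (neg \<Sigma>) [B])) # S)"
| c_or: "cstep \<Sigma> F (Ev \<sigma> (COr \<psi>1 \<psi>2) # S) (Ev \<sigma> \<psi>2 # EvD \<sigma> \<psi>1 # S)"
| c_dtrue: "cstep \<Sigma> F (Res (TT \<Sigma>) # EvD \<sigma> \<psi> # S) (Res (TT \<Sigma>) # S)"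
| c_dfalse: "cstep \<Sigma> F (Res (FF \<Sigma>) # EvD \<sigma> \<psi> # S) (Ev \<sigma> \<psi> # S)"
| c_ex: "cstep \<Sigma> F (Ev \<sigma> (CEx P \<psi>) # S) (ExF F \<sigma> P \<psi> # S)"
| c_match: "match_ext \<Sigma> \<sigma> P \<beta> \<Longrightarrow> F' = F'' + inst \<Sigma> (\<sigma> ++ \<beta>) (pbang P + pquery P) \<Longrightarrow>
    cstep \<Sigma> F (ExF F' \<sigma> P \<psi> # S)
      (Ev (\<sigma> ++ \<beta>) \<psi> # ExF (F'' + inst \<Sigma> (\<sigma> ++ \<beta>) (pbang P)) \<sigma> P \<psi> # S)"
| c_exfalse: "cstep \<Sigma> F (Res (FF \<Sigma>) # ExF F' \<sigma> P \<psi> # S) (ExF F' \<sigma> P \<psi> # S)"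
| c_extrue: "cstep \<Sigma> F (Res (TT \<Sigma>) # ExF F' \<sigma> P \<psi> # S) (Res (TT \<Sigma>) # S)"
| c_nomatch: "\<not> has_match \<Sigma> F' \<sigma> P \<Longrightarrow> cstep \<Sigma> F (ExF F' \<sigma> P \<psi> # S) (Res (FF \<Sigma>) # S)"

inductive cst_step :: "('s,'f,'v) setting \<Rightarrow> ('f,'v) cstate \<Rightarrow> ('f,'v) cstate \<Rightarrow> bool" for \<Sigma> where
  "cstep \<Sigma> F S S' \<Longrightarrow> cst_step \<Sigma> (CSt F S) (CSt F S')"
| "cst_step \<Sigma> (CSt F [Res B]) (Sat B)"

definition init_c :: "('f,'v) cond \<Rightarrow> ('f,'v) trm multiset \<Rightarrow> ('f,'v) cstate" where
  "init_c \<phi> F = CSt F [Ev Map.empty \<phi>]"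

datatype ('f,'v) qframe = QEv "('f,'v) sbst" "('f,'v) query"
  | QCnd "('f,'v) sbst" "('f,'v) cframe list" "('f,'v) query"
  | QFr "('f,'v) trm multiset" "('f,'v) sbst" "('f,'v) pat" "('f,'v) query"

datatype ('f,'v) qstate = QSt "('f,'v) trm multiset" "('f,'v) trm multiset" "('f,'v) qframe list"
  | Ans "('f,'v) trm multiset"

inductive qst_step :: "('s,'f,'v) setting \<Rightarrow> ('f,'v) qstate \<Rightarrow> ('f,'v) qstate \<Rightarrow> bool" for \<Sigma> where
  q_fact: "qst_step \<Sigma> (QSt F A (QEv \<sigma> (QFact f) # S)) (QSt F (A + {# canon \<Sigma> (subst \<sigma> f) #}) S)"
| q_empty: "qst_step \<Sigma> (QSt F A (QEv \<sigma> QEmpty # S)) (QSt F A S)"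
| q_plus: "qst_step \<Sigma> (QSt F A (QEv \<sigma> (QPlus R1 R2) # S)) (QSt F A (QEv \<sigma> R1 # QEv \<sigma> R2 # S))"
| q_imp: "qst_step \<Sigma> (QSt F A (QEv \<sigma> (QImp \<phi> R) # S)) (QSt F A (QCnd \<sigma> [Ev \<sigma> \<phi>] R # S))"
| q_cfalse: "qst_step \<Sigma> (QSt F A (QCnd \<sigma> [Res (FF \<Sigma>)] R # S)) (QSt F A S)"
| q_ctrue: "qst_step \<Sigma> (QSt F A (QCnd \<sigma> [Res (TT \<Sigma>)] R # S)) (QSt F A (QEv \<sigma> R # S))"
| q_cstep: "cstep \<Sigma> F S1 S2 \<Longrightarrow>
    qst_step \<Sigma> (QSt F A (QCnd \<sigma> S1 R # S)) (QSt F A (QCnd \<sigma> S2 R # S))"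
| q_from: "qst_step \<Sigma> (QSt F A (QEv \<sigma> (QFrom P R) # S)) (QSt F A (QFr F \<sigma> P R # S))"
| q_match: "match_ext \<Sigma> \<sigma> P \<beta> \<Longrightarrow> F' = F'' + inst \<Sigma> (\<sigma> ++ \<beta>) (pbang P + pquery P) \<Longrightarrow>
    qst_step \<Sigma> (QSt F A (QFr F' \<sigma> P R # S))
      (QSt F A (QEv (\<sigma> ++ \<beta>) R # QFr (F'' + inst \<Sigma> (\<sigma> ++ \<beta>) (pbang P)) \<sigma> P R # S))"
| q_nomatch: "\<not> has_match \<Sigma> F' \<sigma> P \<Longrightarrow> qst_step \<Sigma> (QSt F A (QFr F' \<sigma> P R # S)) (QSt F A S)"
| q_ans: "qst_step \<Sigma> (QSt F A []) (Ans A)"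

definition init_q :: "('f,'v) query \<Rightarrow> ('f,'v) trm multiset \<Rightarrow> ('f,'v) qstate" where
  "init_q Q F = QSt F {#} [QEv Map.empty Q]"

text \<open>t \<rightarrow>! t': reachable and irreducible.\<close>
definition nf_reach :: "('a \<Rightarrow> 'a \<Rightarrow> bool) \<Rightarrow> 'a \<Rightarrow> 'a \<Rightarrow> bool" where
  "nf_reach R a b \<longleftrightarrow> R\<^sup>*\<^sup>* a b \<and> (\<nexists>c. R b c)"

end

theory Submission
  imports Defs
begin

(*
  The witness translates Q against the fact w = r(x1, ..., xn): the empty query becomes
  False, a fact f the Boolean equality test f = w, R1 \<oplus> R2 the disjunction of the
  translations, \<phi> \<Rightarrow> R the conjunction \<not>(\<not>\<psi> \<or> \<not>\<phi>) of \<phi> with the translation \<psi> of R,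
  and From P.R the condition \<exists>P.\<psi>. The patterns are kept, so determinism is preserved.

  Both machines only work on the top of their stack, so a frame runs to completion
  independently of the frames below it; this gives recursive equations for the outcomes
  of conditions and queries. Evaluation is nondeterministic (matches are consumed in any
  order), so the invariant, proved by induction on the query and, for From, on the size
  of the multiset still to be matched, is: started from an accumulator A, the query can
  end with w among its answers iff w \<in> A or the translation can evaluate to true, and it
  can end without w iff w \<notin> A and the translation can evaluate to false. Taking A = \<emptyset>
  gives the theorem.
*)

lemma rtranclp_det_step:
  assumes "\<And>c. r a c \<longleftrightarrow> c = b" and "a \<noteq> d"
  shows "r\<^sup>*\<^sup>* a d \<longleftrightarrow> r\<^sup>*\<^sup>* b d"
  using assms by (metis converse_rtranclpE converse_rtranclp_into_rtranclp)

lemma converse_rtranclp_iff: "r\<^sup>*\<^sup>* a d \<longleftrightarrow> a = d \<or> (\<exists>c. r a c \<and> r\<^sup>*\<^sup>* c d)"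
  by (metis converse_rtranclpE converse_rtranclp_into_rtranclp rtranclp.rtrancl_refl)

section \<open>The condition machine\<close>

lemma cstep_append: "cstep \<Sigma> F S S' \<Longrightarrow> cstep \<Sigma> F (S @ K) (S' @ K)"
  by (induction rule: cstep.induct) (auto intro: cstep.intros)

lemma csteps_append: "(cstep \<Sigma> F)\<^sup>*\<^sup>* S S' \<Longrightarrow> (cstep \<Sigma> F)\<^sup>*\<^sup>* (S @ K) (S' @ K)"
  by (induction rule: rtranclp_induct) (auto intro: rtranclp.rtrancl_into_rtrancl cstep_append)

lemma cstep_nonempty: "cstep \<Sigma> F S S' \<Longrightarrow> S' \<noteq> []"
  by (induction rule: cstep.induct) auto

lemma csteps_from_Res: "(cstep \<Sigma> F)\<^sup>*\<^sup>* [Res B] S \<longleftrightarrow> S = [Res B]"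
  by (auto elim: converse_rtranclpE cstep.cases)

lemma cstep_append_inv:
  assumes "cstep \<Sigma> F (S @ K) T" and "S \<noteq> []" and "\<forall>B. S \<noteq> [Res B]"
  obtains S' where "T = S' @ K" and "cstep \<Sigma> F S S'"
proof -
  obtain X S1 where S: "S = X # S1" using assms(2) by (cases S) auto
  have not_Res: "\<forall>B. S1 = [] \<longrightarrow> X \<noteq> Res B" using assms(3) S by auto
  have "\<exists>S'. T = S' @ K \<and> cstep \<Sigma> F S S'"
    using assms(1) unfolding S
    by (cases rule: cstep.cases; cases S1) (use not_Res in \<open>force intro: cstep.intros\<close>)+
  then show thesis using that by blast
qed

lemma csteps_append_Res_iff:
  assumes "S \<noteq> []"
  shows "(cstep \<Sigma> F)\<^sup>*\<^sup>* (S @ K) [Res B] \<longleftrightarrow>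
    (\<exists>B1. (cstep \<Sigma> F)\<^sup>*\<^sup>* S [Res B1] \<and> (cstep \<Sigma> F)\<^sup>*\<^sup>* (Res B1 # K) [Res B])"
proof
  assume "(cstep \<Sigma> F)\<^sup>*\<^sup>* (S @ K) [Res B]"
  then show "\<exists>B1. (cstep \<Sigma> F)\<^sup>*\<^sup>* S [Res B1] \<and> (cstep \<Sigma> F)\<^sup>*\<^sup>* (Res B1 # K) [Res B]"
    using assms
  proof (induction "S @ K" arbitrary: S rule: converse_rtranclp_induct)
    case base
    then show ?case by (cases S) auto
  next
    case (step U S)
    show ?case
    proof (cases "\<exists>B1. S = [Res B1]")
      case True
      then show ?thesis using step.hyps(1,2) by (auto intro: converse_rtranclp_into_rtranclp)
    next
      case False
      then obtain S' where "U = S' @ K" and S': "cstep \<Sigma> F S S'"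
        using cstep_append_inv step.hyps(1) step.prems by blast
      then obtain B1 where "(cstep \<Sigma> F)\<^sup>*\<^sup>* S' [Res B1]" "(cstep \<Sigma> F)\<^sup>*\<^sup>* (Res B1 # K) [Res B]"
        using step.hyps(3) cstep_nonempty by blast
      then show ?thesis using S' by (meson converse_rtranclp_into_rtranclp)
    qed
  qed
next
  assume "\<exists>B1. (cstep \<Sigma> F)\<^sup>*\<^sup>* S [Res B1] \<and> (cstep \<Sigma> F)\<^sup>*\<^sup>* (Res B1 # K) [Res B]"
  then obtain B1 where "(cstep \<Sigma> F)\<^sup>*\<^sup>* S [Res B1]" and "(cstep \<Sigma> F)\<^sup>*\<^sup>* (Res B1 # K) [Res B]"
    by blast
  then show "(cstep \<Sigma> F)\<^sup>*\<^sup>* (S @ K) [Res B]"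
    using csteps_append[of \<Sigma> F S "[Res B1]" K] by (simp add: rtranclp_trans)
qed

lemma csteps_Cons_Res_iff:
  "K \<noteq> [] \<Longrightarrow> (cstep \<Sigma> F)\<^sup>*\<^sup>* (X # K) [Res B] \<longleftrightarrow>
    (\<exists>B1. (cstep \<Sigma> F)\<^sup>*\<^sup>* [X] [Res B1] \<and> (cstep \<Sigma> F)\<^sup>*\<^sup>* (Res B1 # K) [Res B])"
  using csteps_append_Res_iff[of "[X]"] by simp

definition ceval :: "('s,'f,'v) setting \<Rightarrow> ('f,'v) trm multiset \<Rightarrow> ('f,'v) sbst \<Rightarrow>
    ('f,'v) cond \<Rightarrow> ('f,'v) trm \<Rightarrow> bool" where
  "ceval \<Sigma> F \<sigma> \<psi> B \<longleftrightarrow> (cstep \<Sigma> F)\<^sup>*\<^sup>* [Ev \<sigma> \<psi>] [Res B]"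

definition ceval_ex :: "('s,'f,'v) setting \<Rightarrow> ('f,'v) trm multiset \<Rightarrow> ('f,'v) trm multiset \<Rightarrow>
    ('f,'v) sbst \<Rightarrow> ('f,'v) pat \<Rightarrow> ('f,'v) cond \<Rightarrow> ('f,'v) trm \<Rightarrow> bool" where
  "ceval_ex \<Sigma> F F' \<sigma> P \<psi> B \<longleftrightarrow> (cstep \<Sigma> F)\<^sup>*\<^sup>* [ExF F' \<sigma> P \<psi>] [Res B]"

lemma ceval_CFalse: "ceval \<Sigma> F \<sigma> CFalse B \<longleftrightarrow> B = FF \<Sigma>"
  unfolding ceval_def
  by (subst rtranclp_det_step[where b = "[Res (FF \<Sigma>)]"])
    (auto elim: cstep.cases intro: cstep.intros simp: csteps_from_Res)

lemma ceval_CAtom: "ceval \<Sigma> F \<sigma> (CAtom B0) B \<longleftrightarrow> B = canon \<Sigma> (subst \<sigma> B0)"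
  unfolding ceval_def
  by (subst rtranclp_det_step[where b = "[Res (canon \<Sigma> (subst \<sigma> B0))]"])
    (auto elim: cstep.cases intro: cstep.intros simp: csteps_from_Res)

lemma ceval_CNot:
  "ceval \<Sigma> F \<sigma> (CNot \<psi>) B \<longleftrightarrow> (\<exists>B1. ceval \<Sigma> F \<sigma> \<psi> B1 \<and> B = canon \<Sigma> (Fn (neg \<Sigma>) [B1]))"
proof -
  have negate: "(cstep \<Sigma> F)\<^sup>*\<^sup>* [Res B1, NotF] [Res B] \<longleftrightarrow> B = canon \<Sigma> (Fn (neg \<Sigma>) [B1])" for B1
    by (subst rtranclp_det_step[where b = "[Res (canon \<Sigma> (Fn (neg \<Sigma>) [B1]))]"])
      (auto elim: cstep.cases intro: cstep.intros simp: csteps_from_Res)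
  have "ceval \<Sigma> F \<sigma> (CNot \<psi>) B \<longleftrightarrow> (cstep \<Sigma> F)\<^sup>*\<^sup>* [Ev \<sigma> \<psi>, NotF] [Res B]"
    unfolding ceval_def by (rule rtranclp_det_step) (auto elim: cstep.cases intro: cstep.intros)
  also have "\<dots> \<longleftrightarrow> (\<exists>B1. ceval \<Sigma> F \<sigma> \<psi> B1 \<and> (cstep \<Sigma> F)\<^sup>*\<^sup>* [Res B1, NotF] [Res B])"
    unfolding ceval_def by (rule csteps_Cons_Res_iff) simp
  finally show ?thesis unfolding negate .
qed

lemma ceval_COr:
  "ceval \<Sigma> F \<sigma> (COr \<psi>1 \<psi>2) B \<longleftrightarrow>
    ceval \<Sigma> F \<sigma> \<psi>2 (TT \<Sigma>) \<and> B = TT \<Sigma> \<or> ceval \<Sigma> F \<sigma> \<psi>2 (FF \<Sigma>) \<and> ceval \<Sigma> F \<sigma> \<psi>1 B"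
proof -
  have step: "cstep \<Sigma> F [Res B2, EvD \<sigma> \<psi>1] S \<longleftrightarrow>
      B2 = TT \<Sigma> \<and> S = [Res (TT \<Sigma>)] \<or> B2 = FF \<Sigma> \<and> S = [Ev \<sigma> \<psi>1]" for B2 S
    by (auto elim: cstep.cases intro: cstep.intros)
  have disjoin: "(cstep \<Sigma> F)\<^sup>*\<^sup>* [Res B2, EvD \<sigma> \<psi>1] [Res B] \<longleftrightarrow>
      B2 = TT \<Sigma> \<and> B = TT \<Sigma> \<or> B2 = FF \<Sigma> \<and> ceval \<Sigma> F \<sigma> \<psi>1 B" for B2
    by (subst converse_rtranclp_iff, simp only: step) (auto simp: ceval_def csteps_from_Res)
  have "ceval \<Sigma> F \<sigma> (COr \<psi>1 \<psi>2) B \<longleftrightarrow> (cstep \<Sigma> F)\<^sup>*\<^sup>* [Ev \<sigma> \<psi>2, EvD \<sigma> \<psi>1] [Res B]"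
    unfolding ceval_def by (rule rtranclp_det_step) (auto elim: cstep.cases intro: cstep.intros)
  also have "\<dots> \<longleftrightarrow> (\<exists>B2. ceval \<Sigma> F \<sigma> \<psi>2 B2 \<and> (cstep \<Sigma> F)\<^sup>*\<^sup>* [Res B2, EvD \<sigma> \<psi>1] [Res B])"
    unfolding ceval_def by (rule csteps_Cons_Res_iff) simp
  finally show ?thesis unfolding disjoin by auto
qed

lemma ceval_CEx: "ceval \<Sigma> F \<sigma> (CEx P \<psi>) B \<longleftrightarrow> ceval_ex \<Sigma> F F \<sigma> P \<psi> B"
  unfolding ceval_def ceval_ex_def
  by (rule rtranclp_det_step) (auto elim: cstep.cases intro: cstep.intros)

lemma ceval_ex_unfold:
  "ceval_ex \<Sigma> F F' \<sigma> P \<psi> B \<longleftrightarrow>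
    \<not> has_match \<Sigma> F' \<sigma> P \<and> B = FF \<Sigma> \<or>
    (\<exists>\<beta> F''. match_ext \<Sigma> \<sigma> P \<beta> \<and> F' = F'' + inst \<Sigma> (\<sigma> ++ \<beta>) (pbang P + pquery P) \<and>
      (ceval \<Sigma> F (\<sigma> ++ \<beta>) \<psi> (TT \<Sigma>) \<and> B = TT \<Sigma> \<or>
       ceval \<Sigma> F (\<sigma> ++ \<beta>) \<psi> (FF \<Sigma>) \<and> ceval_ex \<Sigma> F (F'' + inst \<Sigma> (\<sigma> ++ \<beta>) (pbang P)) \<sigma> P \<psi> B))"
proof -
  have result_step: "cstep \<Sigma> F [Res B1, ExF F2 \<sigma> P \<psi>] S \<longleftrightarrow>
      B1 = TT \<Sigma> \<and> S = [Res (TT \<Sigma>)] \<or> B1 = FF \<Sigma> \<and> S = [ExF F2 \<sigma> P \<psi>]" for B1 F2 S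
    by (auto elim: cstep.cases intro: cstep.intros)
  have next_match: "(cstep \<Sigma> F)\<^sup>*\<^sup>* [Res B1, ExF F2 \<sigma> P \<psi>] [Res B] \<longleftrightarrow>
      B1 = TT \<Sigma> \<and> B = TT \<Sigma> \<or> B1 = FF \<Sigma> \<and> ceval_ex \<Sigma> F F2 \<sigma> P \<psi> B" for B1 F2
    by (subst converse_rtranclp_iff, simp only: result_step) (auto simp: ceval_ex_def csteps_from_Res)
  have after_match: "(cstep \<Sigma> F)\<^sup>*\<^sup>* [Ev \<sigma>' \<psi>, ExF F2 \<sigma> P \<psi>] [Res B] \<longleftrightarrow>
      ceval \<Sigma> F \<sigma>' \<psi> (TT \<Sigma>) \<and> B = TT \<Sigma> \<or> ceval \<Sigma> F \<sigma>' \<psi> (FF \<Sigma>) \<and> ceval_ex \<Sigma> F F2 \<sigma> P \<psi> B"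
    for \<sigma>' F2
    by (subst csteps_Cons_Res_iff, unfold next_match) (auto simp: ceval_def)
  have match_step: "cstep \<Sigma> F [ExF F' \<sigma> P \<psi>] S \<longleftrightarrow>
      \<not> has_match \<Sigma> F' \<sigma> P \<and> S = [Res (FF \<Sigma>)] \<or>
      (\<exists>\<beta> F''. match_ext \<Sigma> \<sigma> P \<beta> \<and> F' = F'' + inst \<Sigma> (\<sigma> ++ \<beta>) (pbang P + pquery P) \<and>
        S = [Ev (\<sigma> ++ \<beta>) \<psi>, ExF (F'' + inst \<Sigma> (\<sigma> ++ \<beta>) (pbang P)) \<sigma> P \<psi>])" for S
    by (auto elim: cstep.cases intro: cstep.intros)
  have "ceval_ex \<Sigma> F F' \<sigma> P \<psi> B \<longleftrightarrow> (\<exists>S. cstep \<Sigma> F [ExF F' \<sigma> P \<psi>] S \<and> (cstep \<Sigma> F)\<^sup>*\<^sup>* S [Res B])"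
    unfolding ceval_ex_def by (subst converse_rtranclp_iff) simp
  also have "\<dots> \<longleftrightarrow> \<not> has_match \<Sigma> F' \<sigma> P \<and> (cstep \<Sigma> F)\<^sup>*\<^sup>* [Res (FF \<Sigma>)] [Res B] \<or>
      (\<exists>\<beta> F''. match_ext \<Sigma> \<sigma> P \<beta> \<and> F' = F'' + inst \<Sigma> (\<sigma> ++ \<beta>) (pbang P + pquery P) \<and>
        (cstep \<Sigma> F)\<^sup>*\<^sup>* [Ev (\<sigma> ++ \<beta>) \<psi>, ExF (F'' + inst \<Sigma> (\<sigma> ++ \<beta>) (pbang P)) \<sigma> P \<psi>] [Res B])"
    unfolding match_step by blast
  finally show ?thesis unfolding after_match csteps_from_Res by auto
qed

lemma ceval_ex_no_match: "\<not> has_match \<Sigma> F' \<sigma> P \<Longrightarrow> ceval_ex \<Sigma> F F' \<sigma> P \<psi> B \<longleftrightarrow> B = FF \<Sigma>"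
  by (subst ceval_ex_unfold) (auto simp: has_match_def)

section \<open>The query machine\<close>

lemma qst_step_QSt_cases:
  "qst_step \<Sigma> (QSt F A S) Y \<Longrightarrow> S = [] \<and> Y = Ans A \<or> (\<exists>A' S'. Y = QSt F A' S')"
  by (cases rule: qst_step.cases) auto

lemma qsteps_from_Ans: "(qst_step \<Sigma>)\<^sup>*\<^sup>* (Ans A) Y \<longleftrightarrow> Y = Ans A"
  by (auto elim: converse_rtranclpE qst_step.cases)

lemma qsteps_from_Nil: "(qst_step \<Sigma>)\<^sup>*\<^sup>* (QSt F A []) (QSt F A' []) \<longleftrightarrow> A' = A"
proof
  assume "(qst_step \<Sigma>)\<^sup>*\<^sup>* (QSt F A []) (QSt F A' [])"
  then show "A' = A"
    by (cases rule: converse_rtranclpE) (auto elim: qst_step.cases simp: qsteps_from_Ans)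
qed simp

lemma qst_step_append:
  "qst_step \<Sigma> (QSt F A S) (QSt F A' S') \<Longrightarrow> qst_step \<Sigma> (QSt F A (S @ K)) (QSt F A' (S' @ K))"
  by (cases rule: qst_step.cases) (auto intro: qst_step.intros qst_step.q_fact[simplified])

lemma qsteps_append:
  "(qst_step \<Sigma>)\<^sup>*\<^sup>* (QSt F A S) (QSt F A' S') \<Longrightarrow>
    (qst_step \<Sigma>)\<^sup>*\<^sup>* (QSt F A (S @ K)) (QSt F A' (S' @ K))"
proof (induction "QSt F A S" arbitrary: A S rule: converse_rtranclp_induct)
  case (step U A S)
  then obtain A2 S2 where U: "U = QSt F A2 S2"
    using qst_step_QSt_cases qsteps_from_Ans by (metis qstate.distinct(1))
  have "qst_step \<Sigma> (QSt F A (S @ K)) (QSt F A2 (S2 @ K))"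
    using step.hyps(1) U qst_step_append by simp
  moreover have "(qst_step \<Sigma>)\<^sup>*\<^sup>* (QSt F A2 (S2 @ K)) (QSt F A' (S' @ K))"
    using step.hyps(3) U by simp
  ultimately show ?case by (rule converse_rtranclp_into_rtranclp)
qed simp

lemma qst_step_append_inv:
  assumes "qst_step \<Sigma> (QSt F A (S @ K)) T" and "S \<noteq> []"
  obtains A' S' where "T = QSt F A' (S' @ K)" and "qst_step \<Sigma> (QSt F A S) (QSt F A' S')"
proof -
  obtain X S1 where S: "S = X # S1" using assms(2) by (cases S) auto
  have "\<exists>A' S'. T = QSt F A' (S' @ K) \<and> qst_step \<Sigma> (QSt F A S) (QSt F A' S')"
    using assms(1) unfolding S
    by (cases rule: qst_step.cases) (force intro: qst_step.intros qst_step.q_fact[simplified])+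
  then show thesis using that by blast
qed

lemma qsteps_append_Nil_iff:
  assumes "S \<noteq> []"
  shows "(qst_step \<Sigma>)\<^sup>*\<^sup>* (QSt F A (S @ K)) (QSt F A' []) \<longleftrightarrow>
    (\<exists>A1. (qst_step \<Sigma>)\<^sup>*\<^sup>* (QSt F A S) (QSt F A1 []) \<and> (qst_step \<Sigma>)\<^sup>*\<^sup>* (QSt F A1 K) (QSt F A' []))"
proof
  assume "(qst_step \<Sigma>)\<^sup>*\<^sup>* (QSt F A (S @ K)) (QSt F A' [])"
  then show "\<exists>A1. (qst_step \<Sigma>)\<^sup>*\<^sup>* (QSt F A S) (QSt F A1 []) \<and>
      (qst_step \<Sigma>)\<^sup>*\<^sup>* (QSt F A1 K) (QSt F A' [])"
    using assms
  proof (induction "QSt F A (S @ K)" arbitrary: A S rule: converse_rtranclp_induct)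
    case (step U A S)
    then obtain A2 S2 where U: "U = QSt F A2 (S2 @ K)" and S2: "qst_step \<Sigma> (QSt F A S) (QSt F A2 S2)"
      using qst_step_append_inv by blast
    show ?case
    proof (cases "S2 = []")
      case True
      then show ?thesis using S2 U step.hyps(2) by auto
    next
      case False
      then show ?thesis using step.hyps(3)[OF U] S2 by (meson converse_rtranclp_into_rtranclp)
    qed
  qed simp
next
  assume "\<exists>A1. (qst_step \<Sigma>)\<^sup>*\<^sup>* (QSt F A S) (QSt F A1 []) \<and>
      (qst_step \<Sigma>)\<^sup>*\<^sup>* (QSt F A1 K) (QSt F A' [])"
  then obtain A1 where "(qst_step \<Sigma>)\<^sup>*\<^sup>* (QSt F A S) (QSt F A1 [])"
    and "(qst_step \<Sigma>)\<^sup>*\<^sup>* (QSt F A1 K) (QSt F A' [])" by blast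
  then show "(qst_step \<Sigma>)\<^sup>*\<^sup>* (QSt F A (S @ K)) (QSt F A' [])"
    using qsteps_append[where K = K] by (metis append_Nil rtranclp_trans)
qed

lemma qsteps_Cons_Nil_iff:
  "K \<noteq> [] \<Longrightarrow> (qst_step \<Sigma>)\<^sup>*\<^sup>* (QSt F A (X # K)) (QSt F A' []) \<longleftrightarrow>
    (\<exists>A1. (qst_step \<Sigma>)\<^sup>*\<^sup>* (QSt F A [X]) (QSt F A1 []) \<and> (qst_step \<Sigma>)\<^sup>*\<^sup>* (QSt F A1 K) (QSt F A' []))"
  using qsteps_append_Nil_iff[of "[X]"] by simp

lemma qsteps_QCnd_lift:
  "(cstep \<Sigma> F)\<^sup>*\<^sup>* C C' \<Longrightarrow> (qst_step \<Sigma>)\<^sup>*\<^sup>* (QSt F A [QCnd \<sigma> C R]) (QSt F A [QCnd \<sigma> C' R])"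
  by (induction rule: rtranclp_induct) (auto intro: rtranclp.rtrancl_into_rtrancl qst_step.q_cstep)

definition qeval :: "('s,'f,'v) setting \<Rightarrow> ('f,'v) trm multiset \<Rightarrow> ('f,'v) sbst \<Rightarrow>
    ('f,'v) query \<Rightarrow> ('f,'v) trm multiset \<Rightarrow> ('f,'v) trm multiset \<Rightarrow> bool" where
  "qeval \<Sigma> F \<sigma> R A A' \<longleftrightarrow> (qst_step \<Sigma>)\<^sup>*\<^sup>* (QSt F A [QEv \<sigma> R]) (QSt F A' [])"

definition qeval_from :: "('s,'f,'v) setting \<Rightarrow> ('f,'v) trm multiset \<Rightarrow> ('f,'v) trm multiset \<Rightarrow>
    ('f,'v) sbst \<Rightarrow> ('f,'v) pat \<Rightarrow> ('f,'v) query \<Rightarrow> ('f,'v) trm multiset \<Rightarrow> ('f,'v) trm multiset \<Rightarrow> bool" where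
  "qeval_from \<Sigma> F F' \<sigma> P R A A' \<longleftrightarrow> (qst_step \<Sigma>)\<^sup>*\<^sup>* (QSt F A [QFr F' \<sigma> P R]) (QSt F A' [])"

lemma qsteps_QCnd_iff:
  "(qst_step \<Sigma>)\<^sup>*\<^sup>* (QSt F A [QCnd \<sigma> C R]) (QSt F A' []) \<longleftrightarrow>
    (cstep \<Sigma> F)\<^sup>*\<^sup>* C [Res (TT \<Sigma>)] \<and> qeval \<Sigma> F \<sigma> R A A' \<or> (cstep \<Sigma> F)\<^sup>*\<^sup>* C [Res (FF \<Sigma>)] \<and> A' = A"
proof
  assume "(qst_step \<Sigma>)\<^sup>*\<^sup>* (QSt F A [QCnd \<sigma> C R]) (QSt F A' [])"
  then show "(cstep \<Sigma> F)\<^sup>*\<^sup>* C [Res (TT \<Sigma>)] \<and> qeval \<Sigma> F \<sigma> R A A' \<or>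
      (cstep \<Sigma> F)\<^sup>*\<^sup>* C [Res (FF \<Sigma>)] \<and> A' = A"
  proof (induction "QSt F A [QCnd \<sigma> C R]" arbitrary: C rule: converse_rtranclp_induct)
    case (step U C)
    have "U = QSt F A [] \<and> C = [Res (FF \<Sigma>)] \<or> U = QSt F A [QEv \<sigma> R] \<and> C = [Res (TT \<Sigma>)] \<or>
        (\<exists>C'. U = QSt F A [QCnd \<sigma> C' R] \<and> cstep \<Sigma> F C C')"
      using step.hyps(1) by (cases rule: qst_step.cases) auto
    then show ?case
      using step.hyps(2,3) by (auto simp: qeval_def qsteps_from_Nil intro: converse_rtranclp_into_rtranclp)
  qed
next
  have "qst_step \<Sigma> (QSt F A [QCnd \<sigma> [Res (TT \<Sigma>)] R]) (QSt F A [QEv \<sigma> R])"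
    using qst_step.q_ctrue[of \<Sigma> F A \<sigma> R "[]"] by simp
  moreover have "qst_step \<Sigma> (QSt F A [QCnd \<sigma> [Res (FF \<Sigma>)] R]) (QSt F A [])"
    using qst_step.q_cfalse[of \<Sigma> F A \<sigma> R "[]"] by simp
  ultimately show "(cstep \<Sigma> F)\<^sup>*\<^sup>* C [Res (TT \<Sigma>)] \<and> qeval \<Sigma> F \<sigma> R A A' \<or>
      (cstep \<Sigma> F)\<^sup>*\<^sup>* C [Res (FF \<Sigma>)] \<and> A' = A \<Longrightarrow>
    (qst_step \<Sigma>)\<^sup>*\<^sup>* (QSt F A [QCnd \<sigma> C R]) (QSt F A' [])"
    unfolding qeval_def
    by (meson converse_rtranclp_into_rtranclp qsteps_QCnd_lift rtranclp.rtrancl_into_rtrancl rtranclp_trans)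
qed

lemma qeval_QEmpty: "qeval \<Sigma> F \<sigma> QEmpty A A' \<longleftrightarrow> A' = A"
  unfolding qeval_def
  by (subst rtranclp_det_step[where b = "QSt F A []"])
    (auto elim: qst_step.cases intro: qst_step.intros simp: qsteps_from_Nil)

lemma qeval_QFact: "qeval \<Sigma> F \<sigma> (QFact f) A A' \<longleftrightarrow> A' = A + {#canon \<Sigma> (subst \<sigma> f)#}"
  unfolding qeval_def
  by (subst rtranclp_det_step[where b = "QSt F (A + {#canon \<Sigma> (subst \<sigma> f)#}) []"])
    (auto elim: qst_step.cases intro: qst_step.q_fact[simplified] simp: qsteps_from_Nil)

lemma qeval_QPlus: "qeval \<Sigma> F \<sigma> (QPlus R1 R2) A A' \<longleftrightarrow> (qeval \<Sigma> F \<sigma> R1 OO qeval \<Sigma> F \<sigma> R2) A A'"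
proof -
  have "qeval \<Sigma> F \<sigma> (QPlus R1 R2) A A' \<longleftrightarrow>
      (qst_step \<Sigma>)\<^sup>*\<^sup>* (QSt F A [QEv \<sigma> R1, QEv \<sigma> R2]) (QSt F A' [])"
    unfolding qeval_def by (rule rtranclp_det_step) (auto elim: qst_step.cases intro: qst_step.intros)
  also have "\<dots> \<longleftrightarrow> (\<exists>A1. qeval \<Sigma> F \<sigma> R1 A A1 \<and> qeval \<Sigma> F \<sigma> R2 A1 A')"
    unfolding qeval_def by (rule qsteps_Cons_Nil_iff) simp
  finally show ?thesis unfolding relcompp_apply .
qed

lemma qeval_QImp:
  "qeval \<Sigma> F \<sigma> (QImp \<phi> R) A A' \<longleftrightarrow>
    ceval \<Sigma> F \<sigma> \<phi> (TT \<Sigma>) \<and> qeval \<Sigma> F \<sigma> R A A' \<or> ceval \<Sigma> F \<sigma> \<phi> (FF \<Sigma>) \<and> A' = A"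
proof -
  have "qeval \<Sigma> F \<sigma> (QImp \<phi> R) A A' \<longleftrightarrow>
      (qst_step \<Sigma>)\<^sup>*\<^sup>* (QSt F A [QCnd \<sigma> [Ev \<sigma> \<phi>] R]) (QSt F A' [])"
    unfolding qeval_def by (rule rtranclp_det_step) (auto elim: qst_step.cases intro: qst_step.intros)
  then show ?thesis unfolding qsteps_QCnd_iff ceval_def .
qed

lemma qeval_QFrom: "qeval \<Sigma> F \<sigma> (QFrom P R) A A' \<longleftrightarrow> qeval_from \<Sigma> F F \<sigma> P R A A'"
  unfolding qeval_def qeval_from_def
  by (rule rtranclp_det_step) (auto elim: qst_step.cases intro: qst_step.intros)

lemma qeval_from_unfold:
  "qeval_from \<Sigma> F F' \<sigma> P R A A' \<longleftrightarrow>
    \<not> has_match \<Sigma> F' \<sigma> P \<and> A' = A \<or>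
    (\<exists>\<beta> F''. match_ext \<Sigma> \<sigma> P \<beta> \<and> F' = F'' + inst \<Sigma> (\<sigma> ++ \<beta>) (pbang P + pquery P) \<and>
      (qeval \<Sigma> F (\<sigma> ++ \<beta>) R OO qeval_from \<Sigma> F (F'' + inst \<Sigma> (\<sigma> ++ \<beta>) (pbang P)) \<sigma> P R) A A')"
proof -
  have match_step: "qst_step \<Sigma> (QSt F A [QFr F' \<sigma> P R]) Y \<longleftrightarrow>
      \<not> has_match \<Sigma> F' \<sigma> P \<and> Y = QSt F A [] \<or>
      (\<exists>\<beta> F''. match_ext \<Sigma> \<sigma> P \<beta> \<and> F' = F'' + inst \<Sigma> (\<sigma> ++ \<beta>) (pbang P + pquery P) \<and>
        Y = QSt F A [QEv (\<sigma> ++ \<beta>) R, QFr (F'' + inst \<Sigma> (\<sigma> ++ \<beta>) (pbang P)) \<sigma> P R])" for Y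
    by (auto elim: qst_step.cases intro: qst_step.intros)
  have "qeval_from \<Sigma> F F' \<sigma> P R A A' \<longleftrightarrow>
      (\<exists>Y. qst_step \<Sigma> (QSt F A [QFr F' \<sigma> P R]) Y \<and> (qst_step \<Sigma>)\<^sup>*\<^sup>* Y (QSt F A' []))"
    unfolding qeval_from_def by (subst converse_rtranclp_iff) simp
  also have "\<dots> \<longleftrightarrow> \<not> has_match \<Sigma> F' \<sigma> P \<and> (qst_step \<Sigma>)\<^sup>*\<^sup>* (QSt F A []) (QSt F A' []) \<or>
      (\<exists>\<beta> F''. match_ext \<Sigma> \<sigma> P \<beta> \<and> F' = F'' + inst \<Sigma> (\<sigma> ++ \<beta>) (pbang P + pquery P) \<and>
        (qst_step \<Sigma>)\<^sup>*\<^sup>* (QSt F A [QEv (\<sigma> ++ \<beta>) R, QFr (F'' + inst \<Sigma> (\<sigma> ++ \<beta>) (pbang P)) \<sigma> P R])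
          (QSt F A' []))"
    unfolding match_step by blast
  also have "\<dots> \<longleftrightarrow> \<not> has_match \<Sigma> F' \<sigma> P \<and> A' = A \<or>
      (\<exists>\<beta> F''. match_ext \<Sigma> \<sigma> P \<beta> \<and> F' = F'' + inst \<Sigma> (\<sigma> ++ \<beta>) (pbang P + pquery P) \<and>
        (\<exists>A1. qeval \<Sigma> F (\<sigma> ++ \<beta>) R A A1 \<and>
          qeval_from \<Sigma> F (F'' + inst \<Sigma> (\<sigma> ++ \<beta>) (pbang P)) \<sigma> P R A1 A'))"
    unfolding qsteps_Cons_Nil_iff[OF list.distinct(2)] qsteps_from_Nil qeval_def qeval_from_def ..
  finally show ?thesis unfolding relcompp_apply .
qed

lemma qeval_from_no_match: "\<not> has_match \<Sigma> F' \<sigma> P \<Longrightarrow> qeval_from \<Sigma> F F' \<sigma> P R A A' \<longleftrightarrow> A' = A"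
  by (subst qeval_from_unfold) (auto simp: has_match_def)

lemma cst_steps_Sat_iff: "(cst_step \<Sigma>)\<^sup>*\<^sup>* (CSt F S) (Sat B) \<longleftrightarrow> (cstep \<Sigma> F)\<^sup>*\<^sup>* S [Res B]"
proof
  assume "(cst_step \<Sigma>)\<^sup>*\<^sup>* (CSt F S) (Sat B)"
  then show "(cstep \<Sigma> F)\<^sup>*\<^sup>* S [Res B]"
  proof (induction "CSt F S" arbitrary: S rule: converse_rtranclp_induct)
    case (step U S)
    from step.hyps(1) show ?case
    proof (cases rule: cst_step.cases)
      case (1 S')
      then have "(cstep \<Sigma> F)\<^sup>*\<^sup>* S' [Res B]" using step.hyps(3) by simp
      then show ?thesis using 1 by (simp add: converse_rtranclp_into_rtranclp)
    next
      case (2 B')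
      then show ?thesis using step.hyps(2) by (auto elim: converse_rtranclpE cst_step.cases)
    qed
  qed
next
  assume "(cstep \<Sigma> F)\<^sup>*\<^sup>* S [Res B]"
  then have "(cst_step \<Sigma>)\<^sup>*\<^sup>* (CSt F S) (CSt F [Res B])"
    by (induction rule: rtranclp_induct) (auto intro: rtranclp.rtrancl_into_rtrancl cst_step.intros)
  then show "(cst_step \<Sigma>)\<^sup>*\<^sup>* (CSt F S) (Sat B)"
    by (auto intro: rtranclp.rtrancl_into_rtrancl cst_step.intros)
qed

lemma nf_reach_init_c_iff: "nf_reach (cst_step \<Sigma>) (init_c \<phi> F) (Sat B) \<longleftrightarrow> ceval \<Sigma> F Map.empty \<phi> B"
  unfolding nf_reach_def init_c_def ceval_def cst_steps_Sat_iff by (auto elim: cst_step.cases)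

lemma qsteps_Ans_iff: "(qst_step \<Sigma>)\<^sup>*\<^sup>* (QSt F A S) (Ans A') \<longleftrightarrow> (qst_step \<Sigma>)\<^sup>*\<^sup>* (QSt F A S) (QSt F A' [])"
proof
  assume "(qst_step \<Sigma>)\<^sup>*\<^sup>* (QSt F A S) (Ans A')"
  then show "(qst_step \<Sigma>)\<^sup>*\<^sup>* (QSt F A S) (QSt F A' [])"
  proof (induction "QSt F A S" arbitrary: A S rule: converse_rtranclp_induct)
    case (step U A S)
    from qst_step_QSt_cases[OF step.hyps(1)] show ?case
    proof
      assume "S = [] \<and> U = Ans A"
      then show ?thesis using step.hyps(2) by (simp add: qsteps_from_Ans)
    next
      assume "\<exists>A2 S2. U = QSt F A2 S2"
      then obtain A2 S2 where "U = QSt F A2 S2" by blast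
      then have "(qst_step \<Sigma>)\<^sup>*\<^sup>* U (QSt F A' [])" using step.hyps(3) by simp
      with step.hyps(1) show ?thesis by (rule converse_rtranclp_into_rtranclp)
    qed
  qed
qed (auto intro: rtranclp.rtrancl_into_rtrancl qst_step.q_ans)

lemma nf_reach_init_q_iff: "nf_reach (qst_step \<Sigma>) (init_q Q F) (Ans A) \<longleftrightarrow> qeval \<Sigma> F Map.empty Q {#} A"
  unfolding nf_reach_def init_q_def qeval_def qsteps_Ans_iff by (auto elim: qst_step.cases)

lemma
  assumes "valid_setting \<Sigma>"
  shows leq_refl: "leq \<Sigma> s s"
    and leq_trans: "leq \<Sigma> s1 s2 \<Longrightarrow> leq \<Sigma> s2 s3 \<Longrightarrow> leq \<Sigma> s1 s3"
    and TT_neq_FF: "TT \<Sigma> \<noteq> FF \<Sigma>"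
    and rank_TT: "([], sBool \<Sigma>) \<in> ranks \<Sigma> (tt \<Sigma>)"
    and rank_FF: "([], sBool \<Sigma>) \<in> ranks \<Sigma> (ff \<Sigma>)"
    and rank_neg: "([sBool \<Sigma>], sBool \<Sigma>) \<in> ranks \<Sigma> (neg \<Sigma>)"
    and rank_eqs: "([s, s], sBool \<Sigma>) \<in> ranks \<Sigma> (eqs \<Sigma> s)"
    and canon_TT: "canon \<Sigma> (TT \<Sigma>) = TT \<Sigma>"
    and canon_FF: "canon \<Sigma> (FF \<Sigma>) = FF \<Sigma>"
    and canon_Bool: "ground b \<Longrightarrow> has_sort \<Sigma> b (sBool \<Sigma>) \<Longrightarrow> canon \<Sigma> b = TT \<Sigma> \<or> canon \<Sigma> b = FF \<Sigma>"
    and canon_neg: "ground b \<Longrightarrow> has_sort \<Sigma> b (sBool \<Sigma>) \<Longrightarrow>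
      canon \<Sigma> (Fn (neg \<Sigma>) [b]) = TT \<Sigma> \<longleftrightarrow> canon \<Sigma> b = FF \<Sigma>"
    and canon_eqs: "ground a \<Longrightarrow> ground b \<Longrightarrow> has_sort \<Sigma> a s \<Longrightarrow> has_sort \<Sigma> b s \<Longrightarrow>
      canon \<Sigma> (Fn (eqs \<Sigma> s) [a, b]) = TT \<Sigma> \<longleftrightarrow> canon \<Sigma> a = canon \<Sigma> b"
  using assms unfolding valid_setting_def by simp_all

lemma has_sort_FnI:
  "valid_setting \<Sigma> \<Longrightarrow> (ss, s) \<in> ranks \<Sigma> f \<Longrightarrow> length ts = length ss \<Longrightarrow>
    (\<forall>i<length ts. has_sort \<Sigma> (ts ! i) (ss ! i)) \<Longrightarrow> has_sort \<Sigma> (Fn f ts) s"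
  by (rule has_sort.hs_fn) (auto simp: leq_refl)

lemma has_sort_leq: "valid_setting \<Sigma> \<Longrightarrow> has_sort \<Sigma> t s1 \<Longrightarrow> leq \<Sigma> s1 s2 \<Longrightarrow> has_sort \<Sigma> t s2"
  by (erule has_sort.cases) (auto intro: has_sort.intros leq_trans)

lemma has_sort_TT: "valid_setting \<Sigma> \<Longrightarrow> has_sort \<Sigma> (TT \<Sigma>) (sBool \<Sigma>)"
  by (rule has_sort_FnI[OF _ rank_TT]) auto

lemma has_sort_FF: "valid_setting \<Sigma> \<Longrightarrow> has_sort \<Sigma> (FF \<Sigma>) (sBool \<Sigma>)"
  by (rule has_sort_FnI[OF _ rank_FF]) auto

lemma has_sort_neg: "valid_setting \<Sigma> \<Longrightarrow> has_sort \<Sigma> b (sBool \<Sigma>) \<Longrightarrow> has_sort \<Sigma> (Fn (neg \<Sigma>) [b]) (sBool \<Sigma>)"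
  by (rule has_sort_FnI[OF _ rank_neg]) auto

lemma has_sort_eqs:
  "valid_setting \<Sigma> \<Longrightarrow> has_sort \<Sigma> a s \<Longrightarrow> has_sort \<Sigma> b s \<Longrightarrow> has_sort \<Sigma> (Fn (eqs \<Sigma> s) [a, b]) (sBool \<Sigma>)"
  by (rule has_sort_FnI[OF _ rank_eqs]) (auto simp: less_Suc_eq nth_Cons')

lemma ground_Fn [simp]: "ground (Fn f ts) \<longleftrightarrow> (\<forall>t\<in>set ts. ground t)"
  unfolding ground_def by auto

lemma canon_neg_TT:
  assumes "valid_setting \<Sigma>"
  shows "canon \<Sigma> (Fn (neg \<Sigma>) [TT \<Sigma>]) = FF \<Sigma>"
proof -
  have "canon \<Sigma> (Fn (neg \<Sigma>) [TT \<Sigma>]) = TT \<Sigma> \<or> canon \<Sigma> (Fn (neg \<Sigma>) [TT \<Sigma>]) = FF \<Sigma>"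
    by (rule canon_Bool[OF assms]) (simp_all add: has_sort_neg has_sort_TT assms)
  moreover have "canon \<Sigma> (Fn (neg \<Sigma>) [TT \<Sigma>]) \<noteq> TT \<Sigma>"
    using canon_neg[OF assms _ has_sort_TT[OF assms]] canon_TT[OF assms] TT_neq_FF[OF assms] by simp
  ultimately show ?thesis by blast
qed

lemma canon_neg_FF:
  assumes "valid_setting \<Sigma>"
  shows "canon \<Sigma> (Fn (neg \<Sigma>) [FF \<Sigma>]) = TT \<Sigma>"
  using canon_neg[OF assms _ has_sort_FF[OF assms]] canon_FF[OF assms] by simp

lemma subst_ground: "ground t \<Longrightarrow> subst \<sigma> t = t"
  by (induction t) (auto simp: ground_def map_idI)

lemma ground_subst: "vars t \<subseteq> dom \<sigma> \<Longrightarrow> \<forall>x b. \<sigma> x = Some b \<longrightarrow> ground b \<Longrightarrow> ground (subst \<sigma> t)"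
  by (induction t) (auto simp: ground_def)

lemma has_sort_subst:
  assumes "valid_setting \<Sigma>" and "\<forall>x b. \<sigma> x = Some b \<longrightarrow> has_sort \<Sigma> b (vsort \<Sigma> x)"
  shows "has_sort \<Sigma> t s \<Longrightarrow> has_sort \<Sigma> (subst \<sigma> t) s"
proof (induction rule: has_sort.induct)
  case (hs_var x s)
  then show ?case
    using assms by (cases "\<sigma> x") (auto intro: has_sort.intros has_sort_leq)
qed (auto intro!: has_sort.hs_fn)

lemma subst_gsub:
  assumes "valid_setting \<Sigma>" and "gsub \<Sigma> \<sigma> (dom \<sigma>)" and "vars t \<subseteq> dom \<sigma>" and "has_sort \<Sigma> t s"
  shows "ground (subst \<sigma> t)" and "has_sort \<Sigma> (subst \<sigma> t) s"
  using assms(2-4) by (auto simp: gsub_def intro!: ground_subst has_sort_subst[OF assms(1)])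

lemma gsub_map_add:
  assumes "gsub \<Sigma> \<sigma> (dom \<sigma>)" and "match_ext \<Sigma> \<sigma> P \<beta>"
  shows "gsub \<Sigma> (\<sigma> ++ \<beta>) (dom (\<sigma> ++ \<beta>))" and "dom (\<sigma> ++ \<beta>) = dom \<sigma> \<union> pvars P"
  using assms unfolding gsub_def match_ext_def by (auto simp: map_add_Some_iff)

lemma subst_map_upds_Vars:
  "length xs = length ts \<Longrightarrow> distinct xs \<Longrightarrow> subst (\<rho>(xs [\<mapsto>] ts)) (Fn f (map Var xs)) = Fn f ts"
proof (induction xs ts arbitrary: \<rho> rule: list_induct2)
  case (Cons x xs t ts)
  then show ?case by (simp del: map_upds_twist)
qed simp

lemma subst_cong: "\<forall>x\<in>vars t. \<sigma>1 x = \<sigma>2 x \<Longrightarrow> subst \<sigma>1 t = subst \<sigma>2 t"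
  by (induction t) auto

lemma psubst_cong: "\<forall>x\<in>pvars P. \<sigma>1 x = \<sigma>2 x \<Longrightarrow> psubst \<sigma>1 P = psubst \<sigma>2 P"
  unfolding psubst_def pvars_def by (auto intro!: image_mset_cong subst_cong)

lemma csubst_cong: "\<forall>x\<in>cvars \<psi>. \<sigma>1 x = \<sigma>2 x \<Longrightarrow> csubst \<sigma>1 \<psi> = csubst \<sigma>2 \<psi>"
  by (induction \<psi>) (auto intro: subst_cong psubst_cong)

lemma qsubst_cong: "\<forall>x\<in>qvars Q. \<sigma>1 x = \<sigma>2 x \<Longrightarrow> qsubst \<sigma>1 Q = qsubst \<sigma>2 Q"
  by (induction Q) (auto intro: subst_cong psubst_cong csubst_cong)

context
  fixes \<Sigma> :: "('s,'f,'v) setting" and \<sigma> :: "('f,'v) sbst"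
  assumes valid: "valid_setting \<Sigma>"
    and sorted: "\<forall>x b. \<sigma> x = Some b \<longrightarrow> has_sort \<Sigma> b (vsort \<Sigma> x)"
begin

lemma wf_pat_subst: "wf_pat \<Sigma> P \<Longrightarrow> wf_pat \<Sigma> (psubst \<sigma> P)"
  unfolding wf_pat_def psubst_def using has_sort_subst[OF valid sorted] by auto

lemma wf_cond_subst: "wf_cond \<Sigma> \<psi> \<Longrightarrow> wf_cond \<Sigma> (csubst \<sigma> \<psi>)"
  by (induction \<psi>) (simp_all add: has_sort_subst[OF valid sorted] wf_pat_subst)

lemma wf_query_subst: "wf_query \<Sigma> Q \<Longrightarrow> wf_query \<Sigma> (qsubst \<sigma> Q)"
  by (induction Q) (simp_all add: has_sort_subst[OF valid sorted] wf_pat_subst wf_cond_subst)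

end

lemma size_remaining_less:
  assumes "wf_pat \<Sigma> P"
  shows "size (F'' + inst \<Sigma> \<sigma> (pbang P)) < size (F'' + inst \<Sigma> \<sigma> (pbang P + pquery P))"
  using assms by (simp add: wf_pat_def inst_def nonempty_has_size)

section \<open>Closed conditions evaluate to Booleans\<close>

definition bool_valued :: "('s,'f,'v) setting \<Rightarrow> (('f,'v) trm \<Rightarrow> bool) \<Rightarrow> bool" where
  "bool_valued \<Sigma> ev \<longleftrightarrow> (\<exists>B. ev B) \<and> (\<forall>B. ev B \<longrightarrow> B = TT \<Sigma> \<or> B = FF \<Sigma>)"

lemma bool_valued_TT_or_FF: "bool_valued \<Sigma> ev \<Longrightarrow> ev (TT \<Sigma>) \<or> ev (FF \<Sigma>)"
  unfolding bool_valued_def by blast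

lemma ceval_CNot_bool:
  assumes "valid_setting \<Sigma>" and "bool_valued \<Sigma> (ceval \<Sigma> F \<sigma> \<psi>)"
  shows "ceval \<Sigma> F \<sigma> (CNot \<psi>) B \<longleftrightarrow>
    B = TT \<Sigma> \<and> ceval \<Sigma> F \<sigma> \<psi> (FF \<Sigma>) \<or> B = FF \<Sigma> \<and> ceval \<Sigma> F \<sigma> \<psi> (TT \<Sigma>)"
  using assms(2) canon_neg_TT[OF assms(1)] canon_neg_FF[OF assms(1)]
  unfolding ceval_CNot bool_valued_def by auto

lemma bool_valued_CNot:
  assumes "valid_setting \<Sigma>" and "bool_valued \<Sigma> (ceval \<Sigma> F \<sigma> \<psi>)"
  shows "bool_valued \<Sigma> (ceval \<Sigma> F \<sigma> (CNot \<psi>))"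
  using bool_valued_TT_or_FF[OF assms(2)] unfolding bool_valued_def ceval_CNot_bool[OF assms] by auto

lemma bool_valued_COr:
  assumes "bool_valued \<Sigma> (ceval \<Sigma> F \<sigma> \<psi>1)" and "bool_valued \<Sigma> (ceval \<Sigma> F \<sigma> \<psi>2)"
  shows "bool_valued \<Sigma> (ceval \<Sigma> F \<sigma> (COr \<psi>1 \<psi>2))"
proof -
  obtain B1 where B1: "ceval \<Sigma> F \<sigma> \<psi>1 B1" using assms(1) unfolding bool_valued_def by blast
  have "\<exists>B. ceval \<Sigma> F \<sigma> (COr \<psi>1 \<psi>2) B"
  proof (cases "ceval \<Sigma> F \<sigma> \<psi>2 (TT \<Sigma>)")
    case False
    then show ?thesis using bool_valued_TT_or_FF[OF assms(2)] B1 unfolding ceval_COr by blast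
  qed (auto simp: ceval_COr)
  moreover have "B = TT \<Sigma> \<or> B = FF \<Sigma>" if "ceval \<Sigma> F \<sigma> (COr \<psi>1 \<psi>2) B" for B
    using that assms(1) unfolding ceval_COr bool_valued_def by auto
  ultimately show ?thesis unfolding bool_valued_def by blast
qed

lemma ceval_ex_bool_valued:
  assumes "valid_setting \<Sigma>" and "wf_pat \<Sigma> P"
    and "\<And>\<beta>. match_ext \<Sigma> \<sigma> P \<beta> \<Longrightarrow> bool_valued \<Sigma> (ceval \<Sigma> F (\<sigma> ++ \<beta>) \<psi>)"
  shows "bool_valued \<Sigma> (ceval_ex \<Sigma> F F' \<sigma> P \<psi>)"
proof (induction F' rule: measure_induct_rule[of size])
  case (less F')
  show ?case
  proof (cases "has_match \<Sigma> F' \<sigma> P")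
    case False
    then show ?thesis by (simp add: bool_valued_def ceval_ex_no_match)
  next
    case True
    then obtain \<beta> F'' where match: "match_ext \<Sigma> \<sigma> P \<beta>"
      and F': "F' = F'' + inst \<Sigma> (\<sigma> ++ \<beta>) (pbang P + pquery P)"
      unfolding has_match_def by blast
    have rest: "bool_valued \<Sigma> (ceval_ex \<Sigma> F (G + inst \<Sigma> (\<sigma> ++ \<gamma>) (pbang P)) \<sigma> P \<psi>)"
      if "F' = G + inst \<Sigma> (\<sigma> ++ \<gamma>) (pbang P + pquery P)" for G \<gamma>
      using less size_remaining_less[OF assms(2)] that by blast
    have "\<exists>B. ceval_ex \<Sigma> F F' \<sigma> P \<psi> B"
      using bool_valued_TT_or_FF[OF assms(3)[OF match]] rest[OF F'] match F'
      unfolding bool_valued_def by (subst ceval_ex_unfold) blast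
    moreover have "B = TT \<Sigma> \<or> B = FF \<Sigma>" if "ceval_ex \<Sigma> F F' \<sigma> P \<psi> B" for B
      using that rest unfolding bool_valued_def ceval_ex_unfold[of \<Sigma> F F' \<sigma> P \<psi> B] by blast
    ultimately show ?thesis unfolding bool_valued_def by blast
  qed
qed

lemma ceval_bool_valued:
  assumes "valid_setting \<Sigma>"
  shows "gsub \<Sigma> \<sigma> (dom \<sigma>) \<Longrightarrow> cclosed (dom \<sigma>) \<psi> \<Longrightarrow> wf_cond \<Sigma> \<psi> \<Longrightarrow>
    bool_valued \<Sigma> (ceval \<Sigma> F \<sigma> \<psi>)"
proof (induction \<psi> arbitrary: \<sigma>)
  case CFalse
  then show ?case by (simp add: bool_valued_def ceval_CFalse)
next
  case (CAtom B0)
  then have "ground (subst \<sigma> B0)" and "has_sort \<Sigma> (subst \<sigma> B0) (sBool \<Sigma>)"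
    using subst_gsub[OF assms] by simp_all
  then show ?case using canon_Bool[OF assms] by (simp add: bool_valued_def ceval_CAtom)
next
  case (CNot \<psi>)
  then show ?case using bool_valued_CNot[OF assms] by simp
next
  case (COr \<psi>1 \<psi>2)
  then show ?case by (auto intro: bool_valued_COr)
next
  case (CEx P \<psi>)
  have "bool_valued \<Sigma> (ceval \<Sigma> F (\<sigma> ++ \<beta>) \<psi>)" if "match_ext \<Sigma> \<sigma> P \<beta>" for \<beta>
    using CEx gsub_map_add[OF CEx.prems(1) that] by simp
  then show ?case
    using ceval_ex_bool_valued[OF assms] CEx.prems(3) by (simp add: ceval_CEx[abs_def])
qed

abbreviation CAnd :: "('f,'v) cond \<Rightarrow> ('f,'v) cond \<Rightarrow> ('f,'v) cond" where
  "CAnd \<psi> \<phi> \<equiv> CNot (COr (CNot \<psi>) (CNot \<phi>))"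

lemma ceval_CAnd:
  assumes "valid_setting \<Sigma>" and "bool_valued \<Sigma> (ceval \<Sigma> F \<sigma> \<psi>)" and "bool_valued \<Sigma> (ceval \<Sigma> F \<sigma> \<phi>)"
  shows "ceval \<Sigma> F \<sigma> (CAnd \<psi> \<phi>) B \<longleftrightarrow>
    B = TT \<Sigma> \<and> ceval \<Sigma> F \<sigma> \<phi> (TT \<Sigma>) \<and> ceval \<Sigma> F \<sigma> \<psi> (TT \<Sigma>) \<or>
    B = FF \<Sigma> \<and> (ceval \<Sigma> F \<sigma> \<phi> (FF \<Sigma>) \<or> ceval \<Sigma> F \<sigma> \<phi> (TT \<Sigma>) \<and> ceval \<Sigma> F \<sigma> \<psi> (FF \<Sigma>))"
  using assms TT_neq_FF[OF assms(1)]
  by (auto simp: ceval_CNot_bool bool_valued_CNot bool_valued_COr ceval_COr)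

lemma ceval_CAtom_eqs:
  assumes "valid_setting \<Sigma>" and "ground (subst \<sigma> a)" "ground (subst \<sigma> b)"
    and "has_sort \<Sigma> (subst \<sigma> a) s" "has_sort \<Sigma> (subst \<sigma> b) s"
  shows "ceval \<Sigma> F \<sigma> (CAtom (Fn (eqs \<Sigma> s) [a, b])) B \<longleftrightarrow>
    B = TT \<Sigma> \<and> canon \<Sigma> (subst \<sigma> a) = canon \<Sigma> (subst \<sigma> b) \<or>
    B = FF \<Sigma> \<and> canon \<Sigma> (subst \<sigma> a) \<noteq> canon \<Sigma> (subst \<sigma> b)"
  using canon_eqs[OF assms] canon_Bool[OF assms(1) _ has_sort_eqs[OF assms(1,4,5)]] assms(2,3)
    TT_neq_FF[OF assms(1)]
  by (auto simp: ceval_CAtom)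

section \<open>Membership of one fact in the answers of a nondeterministic run\<close>

(* In use, t and f say whether the answer condition can evaluate to true, resp. to false. *)
definition decides_member ::
    "('a multiset \<Rightarrow> 'a multiset \<Rightarrow> bool) \<Rightarrow> 'a \<Rightarrow> bool \<Rightarrow> bool \<Rightarrow> bool" where
  "decides_member run u t f \<longleftrightarrow> (\<forall>A. \<exists>A'. run A A') \<and>
     (\<forall>A. (\<exists>A'. run A A' \<and> u \<in># A') \<longleftrightarrow> u \<in># A \<or> t) \<and>
     (\<forall>A. (\<exists>A'. run A A' \<and> u \<notin># A') \<longleftrightarrow> u \<notin># A \<and> f)"

lemma decides_memberD:
  assumes "decides_member run u t f"
  shows "\<exists>A'. run A A'"
    and "(\<exists>A'. run A A' \<and> u \<in># A') \<longleftrightarrow> u \<in># A \<or> t"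
    and "(\<exists>A'. run A A' \<and> u \<notin># A') \<longleftrightarrow> u \<notin># A \<and> f"
  using assms unfolding decides_member_def by blast+

lemma decides_member_true_or_false: "decides_member run u t f \<Longrightarrow> t \<or> f"
  using decides_memberD[of run u t f "{#}"] by auto

lemma decides_member_Id: "decides_member (\<lambda>A A'. A' = A) u False True"
  by (simp add: decides_member_def)

lemma decides_member_add: "decides_member (\<lambda>A A'. A' = A + {#g#}) u (g = u) (g \<noteq> u)"
  by (auto simp: decides_member_def)

lemma ex_relcompp: "(\<exists>c. (r OO s) a c \<and> P c) \<longleftrightarrow> (\<exists>b. r a b \<and> (\<exists>c. s b c \<and> P c))"
  by auto

lemma decides_member_relcompp:
  assumes "decides_member r1 u t1 f1" and "decides_member r2 u t2 f2"
  shows "decides_member (r1 OO r2) u (t1 \<or> f1 \<and> t2) (f1 \<and> f2)"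
  unfolding decides_member_def
proof (intro conjI allI)
  have t1_or_f1: "t1 \<or> f1" by (rule decides_member_true_or_false[OF assms(1)])
  fix A
  note D1 = decides_memberD[OF assms(1), of A] and D2 = decides_memberD[OF assms(2)]
  show "\<exists>A'. (r1 OO r2) A A'"
    using D1(1) D2(1) by (meson relcomppI)
  have "(\<exists>A'. (r1 OO r2) A A' \<and> u \<in># A') \<longleftrightarrow> (\<exists>A1. r1 A A1 \<and> (u \<in># A1 \<or> t2))"
    unfolding ex_relcompp D2(2) ..
  also have "\<dots> \<longleftrightarrow> (\<exists>A1. r1 A A1 \<and> u \<in># A1) \<or> t2"
    using D1(1) by auto
  finally show "(\<exists>A'. (r1 OO r2) A A' \<and> u \<in># A') \<longleftrightarrow> u \<in># A \<or> t1 \<or> f1 \<and> t2"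
    unfolding D1(2) using t1_or_f1 by blast
  have "(\<exists>A'. (r1 OO r2) A A' \<and> u \<notin># A') \<longleftrightarrow> (\<exists>A1. r1 A A1 \<and> u \<notin># A1 \<and> f2)"
    unfolding ex_relcompp D2(3) ..
  also have "\<dots> \<longleftrightarrow> (\<exists>A1. r1 A A1 \<and> u \<notin># A1) \<and> f2"
    by auto
  finally show "(\<exists>A'. (r1 OO r2) A A' \<and> u \<notin># A') \<longleftrightarrow> u \<notin># A \<and> f1 \<and> f2"
    unfolding D1(3) by simp
qed

lemma decides_member_guard:
  assumes "c \<or> c'" and "decides_member r u t f"
  shows "decides_member (\<lambda>A A'. c \<and> r A A' \<or> c' \<and> A' = A) u (c \<and> t) (c' \<or> c \<and> f)"
  unfolding decides_member_def
proof (intro conjI allI)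
  fix A
  note D = decides_memberD[OF assms(2), of A]
  have split: "(\<exists>A'. (c \<and> r A A' \<or> c' \<and> A' = A) \<and> P A') \<longleftrightarrow>
      c \<and> (\<exists>A'. r A A' \<and> P A') \<or> c' \<and> P A" for P
    by auto
  show "\<exists>A'. c \<and> r A A' \<or> c' \<and> A' = A"
    using assms(1) D(1) by auto
  show "(\<exists>A'. (c \<and> r A A' \<or> c' \<and> A' = A) \<and> u \<in># A') \<longleftrightarrow> u \<in># A \<or> c \<and> t"
    unfolding split D(2) using assms(1) by auto
  show "(\<exists>A'. (c \<and> r A A' \<or> c' \<and> A' = A) \<and> u \<notin># A') \<longleftrightarrow> u \<notin># A \<and> (c' \<or> c \<and> f)"
    unfolding split D(3) using assms(1) by auto
qed

lemma decides_member_Ex: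
  assumes "\<exists>i. M i" and "\<And>i. M i \<Longrightarrow> decides_member (r i) u (t i) (f i)"
  shows "decides_member (\<lambda>A A'. \<exists>i. M i \<and> r i A A') u (\<exists>i. M i \<and> t i) (\<exists>i. M i \<and> f i)"
proof -
  have swap: "(\<exists>A'. (\<exists>i. M i \<and> r i A A') \<and> P A') \<longleftrightarrow> (\<exists>i. M i \<and> (\<exists>A'. r i A A' \<and> P A'))" for A P
    by blast
  have "(\<exists>i. M i \<and> (\<exists>A'. r i A A' \<and> u \<in># A')) \<longleftrightarrow> (\<exists>i. M i \<and> (u \<in># A \<or> t i))" for A
    using decides_memberD(2)[OF assms(2)] by blast
  moreover have "(\<exists>i. M i \<and> (\<exists>A'. r i A A' \<and> u \<notin># A')) \<longleftrightarrow> (\<exists>i. M i \<and> u \<notin># A \<and> f i)" for A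
    using decides_memberD(3)[OF assms(2)] by blast
  moreover have "\<exists>A' i. M i \<and> r i A A'" for A
    using assms(1) decides_memberD(1)[OF assms(2)] by blast
  ultimately show ?thesis
    unfolding decides_member_def swap using assms(1) by blast
qed

lemma qeval_from_decides_member:
  assumes valid: "valid_setting \<Sigma>" and wf: "wf_pat \<Sigma> P"
    and match: "\<And>\<beta>. match_ext \<Sigma> \<sigma> P \<beta> \<Longrightarrow> decides_member (qeval \<Sigma> F (\<sigma> ++ \<beta>) R) u
      (ceval \<Sigma> F (\<sigma> ++ \<beta>) \<psi> (TT \<Sigma>)) (ceval \<Sigma> F (\<sigma> ++ \<beta>) \<psi> (FF \<Sigma>))"
  shows "decides_member (qeval_from \<Sigma> F F' \<sigma> P R) u
    (ceval_ex \<Sigma> F F' \<sigma> P \<psi> (TT \<Sigma>)) (ceval_ex \<Sigma> F F' \<sigma> P \<psi> (FF \<Sigma>))"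
proof (induction F' rule: measure_induct_rule[of size])
  case (less F')
  show ?case
  proof (cases "has_match \<Sigma> F' \<sigma> P")
    case False
    have "qeval_from \<Sigma> F F' \<sigma> P R = (\<lambda>A A'. A' = A)"
      using False by (simp add: fun_eq_iff qeval_from_no_match)
    then show ?thesis
      using False decides_member_Id TT_neq_FF[OF valid] by (simp add: ceval_ex_no_match)
  next
    case True
    let ?M = "\<lambda>(\<beta>, F''). match_ext \<Sigma> \<sigma> P \<beta> \<and> F' = F'' + inst \<Sigma> (\<sigma> ++ \<beta>) (pbang P + pquery P)"
    let ?rest = "\<lambda>\<beta> F''. F'' + inst \<Sigma> (\<sigma> ++ \<beta>) (pbang P)"
    have "decides_member (qeval \<Sigma> F (\<sigma> ++ \<beta>) R OO qeval_from \<Sigma> F (?rest \<beta> F'') \<sigma> P R) u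
        (ceval \<Sigma> F (\<sigma> ++ \<beta>) \<psi> (TT \<Sigma>) \<or>
         ceval \<Sigma> F (\<sigma> ++ \<beta>) \<psi> (FF \<Sigma>) \<and> ceval_ex \<Sigma> F (?rest \<beta> F'') \<sigma> P \<psi> (TT \<Sigma>))
        (ceval \<Sigma> F (\<sigma> ++ \<beta>) \<psi> (FF \<Sigma>) \<and> ceval_ex \<Sigma> F (?rest \<beta> F'') \<sigma> P \<psi> (FF \<Sigma>))"
      if "?M (\<beta>, F'')" for \<beta> F''
      using that decides_member_relcompp[OF match less[rule_format]] size_remaining_less[OF wf]
      by simp
    then have "decides_member (\<lambda>A A'. \<exists>i. ?M i \<and> (case i of (\<beta>, F'') \<Rightarrow>
          (qeval \<Sigma> F (\<sigma> ++ \<beta>) R OO qeval_from \<Sigma> F (?rest \<beta> F'') \<sigma> P R) A A')) u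
        (\<exists>i. ?M i \<and> (case i of (\<beta>, F'') \<Rightarrow> ceval \<Sigma> F (\<sigma> ++ \<beta>) \<psi> (TT \<Sigma>) \<or>
          ceval \<Sigma> F (\<sigma> ++ \<beta>) \<psi> (FF \<Sigma>) \<and> ceval_ex \<Sigma> F (?rest \<beta> F'') \<sigma> P \<psi> (TT \<Sigma>)))
        (\<exists>i. ?M i \<and> (case i of (\<beta>, F'') \<Rightarrow>
          ceval \<Sigma> F (\<sigma> ++ \<beta>) \<psi> (FF \<Sigma>) \<and> ceval_ex \<Sigma> F (?rest \<beta> F'') \<sigma> P \<psi> (FF \<Sigma>)))"
      using True unfolding has_match_def by (intro decides_member_Ex) auto
    then show ?thesis
      using True TT_neq_FF[OF valid]
      by (simp add: split_paired_Ex qeval_from_unfold[of \<Sigma> F F'] ceval_ex_unfold[of \<Sigma> F F'])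
  qed
qed

section \<open>The condition recognising one answer of a query\<close>

(* The right operand of COr and CAnd is evaluated first; the operands are ordered so that the
   condition consults R1 before R2 and \<phi> before R, as the query machine does. *)
fun answer_cond :: "('s,'f,'v) setting \<Rightarrow> ('f,'v) query \<Rightarrow> ('f,'v) trm \<Rightarrow> ('f,'v) cond" where
  "answer_cond \<Sigma> QEmpty w = CFalse"
| "answer_cond \<Sigma> (QFact f) w = CAtom (Fn (eqs \<Sigma> (sFact \<Sigma>)) [f, w])"
| "answer_cond \<Sigma> (QPlus R1 R2) w = COr (answer_cond \<Sigma> R2 w) (answer_cond \<Sigma> R1 w)"
| "answer_cond \<Sigma> (QImp \<phi> R) w = CAnd (answer_cond \<Sigma> R w) \<phi>"
| "answer_cond \<Sigma> (QFrom P R) w = CEx P (answer_cond \<Sigma> R w)"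

lemma cclosed_answer_cond: "qclosed V R \<Longrightarrow> ground w \<Longrightarrow> cclosed V (answer_cond \<Sigma> R w)"
  by (induction R arbitrary: V) (auto simp: ground_def)

lemma wf_cond_answer_cond:
  "valid_setting \<Sigma> \<Longrightarrow> has_sort \<Sigma> w (sFact \<Sigma>) \<Longrightarrow> wf_query \<Sigma> R \<Longrightarrow> wf_cond \<Sigma> (answer_cond \<Sigma> R w)"
  by (induction R) (auto intro: has_sort_eqs)

lemma cdet_answer_cond: "qdet \<Sigma> R \<Longrightarrow> cdet \<Sigma> (answer_cond \<Sigma> R w)"
  by (induction R) auto

lemma csubst_answer_cond: "csubst \<sigma> (answer_cond \<Sigma> R w) = answer_cond \<Sigma> (qsubst \<sigma> R) (subst \<sigma> w)"
  by (induction R) auto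

lemma qeval_decides_member_answer_cond:
  assumes valid: "valid_setting \<Sigma>" and w: "ground w" "has_sort \<Sigma> w (sFact \<Sigma>)"
  shows "gsub \<Sigma> \<sigma> (dom \<sigma>) \<Longrightarrow> qclosed (dom \<sigma>) R \<Longrightarrow> wf_query \<Sigma> R \<Longrightarrow>
    decides_member (qeval \<Sigma> F \<sigma> R) (canon \<Sigma> w)
      (ceval \<Sigma> F \<sigma> (answer_cond \<Sigma> R w) (TT \<Sigma>)) (ceval \<Sigma> F \<sigma> (answer_cond \<Sigma> R w) (FF \<Sigma>))"
proof (induction R arbitrary: \<sigma>)
  case QEmpty
  have "qeval \<Sigma> F \<sigma> QEmpty = (\<lambda>A A'. A' = A)"
    by (simp add: fun_eq_iff qeval_QEmpty)
  then show ?case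
    using decides_member_Id TT_neq_FF[OF valid] by (simp add: ceval_CFalse)
next
  case (QFact f)
  have g: "ground (subst \<sigma> f)" "has_sort \<Sigma> (subst \<sigma> f) (sFact \<Sigma>)"
    using subst_gsub[OF valid] QFact.prems by simp_all
  have "ceval \<Sigma> F \<sigma> (answer_cond \<Sigma> (QFact f) w) B \<longleftrightarrow>
      B = TT \<Sigma> \<and> canon \<Sigma> (subst \<sigma> f) = canon \<Sigma> w \<or> B = FF \<Sigma> \<and> canon \<Sigma> (subst \<sigma> f) \<noteq> canon \<Sigma> w" for B
    using ceval_CAtom_eqs[OF valid g(1) _ g(2), where b = w] w subst_ground[OF w(1)] by simp
  moreover have "qeval \<Sigma> F \<sigma> (QFact f) = (\<lambda>A A'. A' = A + {#canon \<Sigma> (subst \<sigma> f)#})"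
    by (simp add: fun_eq_iff qeval_QFact)
  ultimately show ?case
    using decides_member_add[of "canon \<Sigma> (subst \<sigma> f)" "canon \<Sigma> w"] TT_neq_FF[OF valid] by simp
next
  case (QPlus R1 R2)
  have "decides_member (qeval \<Sigma> F \<sigma> R1 OO qeval \<Sigma> F \<sigma> R2) (canon \<Sigma> w)
      (ceval \<Sigma> F \<sigma> (answer_cond \<Sigma> R1 w) (TT \<Sigma>) \<or>
       ceval \<Sigma> F \<sigma> (answer_cond \<Sigma> R1 w) (FF \<Sigma>) \<and> ceval \<Sigma> F \<sigma> (answer_cond \<Sigma> R2 w) (TT \<Sigma>))
      (ceval \<Sigma> F \<sigma> (answer_cond \<Sigma> R1 w) (FF \<Sigma>) \<and> ceval \<Sigma> F \<sigma> (answer_cond \<Sigma> R2 w) (FF \<Sigma>))"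
    using QPlus by (intro decides_member_relcompp) simp_all
  moreover have "qeval \<Sigma> F \<sigma> (QPlus R1 R2) = qeval \<Sigma> F \<sigma> R1 OO qeval \<Sigma> F \<sigma> R2"
    by (simp add: fun_eq_iff qeval_QPlus)
  ultimately show ?case
    using TT_neq_FF[OF valid] by (simp add: ceval_COr)
next
  case (QImp \<phi> R)
  let ?c = "answer_cond \<Sigma> R w"
  have IH: "decides_member (qeval \<Sigma> F \<sigma> R) (canon \<Sigma> w)
      (ceval \<Sigma> F \<sigma> ?c (TT \<Sigma>)) (ceval \<Sigma> F \<sigma> ?c (FF \<Sigma>))"
    using QImp by simp
  have "cclosed (dom \<sigma>) \<phi>" "wf_cond \<Sigma> \<phi>" "cclosed (dom \<sigma>) ?c" "wf_cond \<Sigma> ?c"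
    using QImp.prems cclosed_answer_cond[OF _ w(1)] wf_cond_answer_cond[OF valid w(2)] by auto
  then have bool: "bool_valued \<Sigma> (ceval \<Sigma> F \<sigma> \<phi>)" "bool_valued \<Sigma> (ceval \<Sigma> F \<sigma> ?c)"
    using ceval_bool_valued[OF valid QImp.prems(1)] by simp_all
  have "qeval \<Sigma> F \<sigma> (QImp \<phi> R) = (\<lambda>A A'.
      ceval \<Sigma> F \<sigma> \<phi> (TT \<Sigma>) \<and> qeval \<Sigma> F \<sigma> R A A' \<or> ceval \<Sigma> F \<sigma> \<phi> (FF \<Sigma>) \<and> A' = A)"
    by (simp add: fun_eq_iff qeval_QImp)
  then show ?case
    using decides_member_guard[OF bool_valued_TT_or_FF[OF bool(1)] IH] TT_neq_FF[OF valid]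
    by (simp add: ceval_CAnd[OF valid bool(2,1)])
next
  case (QFrom P R)
  have wf: "wf_pat \<Sigma> P" using QFrom.prems(3) by simp
  have "decides_member (qeval \<Sigma> F (\<sigma> ++ \<beta>) R) (canon \<Sigma> w)
      (ceval \<Sigma> F (\<sigma> ++ \<beta>) (answer_cond \<Sigma> R w) (TT \<Sigma>)) (ceval \<Sigma> F (\<sigma> ++ \<beta>) (answer_cond \<Sigma> R w) (FF \<Sigma>))"
    if "match_ext \<Sigma> \<sigma> P \<beta>" for \<beta>
  proof (rule QFrom.IH)
    show "gsub \<Sigma> (\<sigma> ++ \<beta>) (dom (\<sigma> ++ \<beta>))" by (rule gsub_map_add[OF QFrom.prems(1) that])
    show "qclosed (dom (\<sigma> ++ \<beta>)) R"
      using QFrom.prems(2) gsub_map_add(2)[OF QFrom.prems(1) that] by simp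
    show "wf_query \<Sigma> R" using QFrom.prems(3) by simp
  qed
  with wf have "decides_member (qeval_from \<Sigma> F F \<sigma> P R) (canon \<Sigma> w)
      (ceval_ex \<Sigma> F F \<sigma> P (answer_cond \<Sigma> R w) (TT \<Sigma>)) (ceval_ex \<Sigma> F F \<sigma> P (answer_cond \<Sigma> R w) (FF \<Sigma>))"
    by (rule qeval_from_decides_member[OF valid])
  moreover have "qeval \<Sigma> F \<sigma> (QFrom P R) = qeval_from \<Sigma> F F \<sigma> P R"
    by (simp add: fun_eq_iff qeval_QFrom)
  ultimately show ?case by (simp add: ceval_CEx)
qed

lemma ex_add_single_iff: "(\<exists>M. P (M + {#x#})) \<longleftrightarrow> (\<exists>N. P N \<and> x \<in># N)"
proof
  assume "\<exists>N. P N \<and> x \<in># N"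
  then obtain N where "P N" and "x \<in># N" by blast
  then have "P (N - {#x#} + {#x#})" by simp
  then show "\<exists>M. P (M + {#x#})" ..
qed auto

lemma answer_cond_correct:
  assumes valid: "valid_setting \<Sigma>" and t: "ground t" "has_sort \<Sigma> t (sFact \<Sigma>)"
    and Q: "wf_query \<Sigma> Q" "qclosed {} Q"
  shows "cclosed {} (answer_cond \<Sigma> Q t)"
    and "nf_reach (cst_step \<Sigma>) (init_c (answer_cond \<Sigma> Q t) F) (Sat (TT \<Sigma>)) \<longleftrightarrow>
      (\<exists>F'. nf_reach (qst_step \<Sigma>) (init_q Q F) (Ans (F' + {#canon \<Sigma> t#})))"
    and "nf_reach (cst_step \<Sigma>) (init_c (answer_cond \<Sigma> Q t) F) (Sat (FF \<Sigma>)) \<longleftrightarrow>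
      (\<exists>F'. canon \<Sigma> t \<notin># F' \<and> nf_reach (qst_step \<Sigma>) (init_q Q F) (Ans F'))"
proof -
  show "cclosed {} (answer_cond \<Sigma> Q t)" by (rule cclosed_answer_cond[OF Q(2) t(1)])
  have "gsub \<Sigma> Map.empty (dom Map.empty)" by (simp add: gsub_def)
  moreover have "qclosed (dom Map.empty) Q" using Q(2) by simp
  ultimately have D: "decides_member (qeval \<Sigma> F Map.empty Q) (canon \<Sigma> t)
      (ceval \<Sigma> F Map.empty (answer_cond \<Sigma> Q t) (TT \<Sigma>)) (ceval \<Sigma> F Map.empty (answer_cond \<Sigma> Q t) (FF \<Sigma>))"
    using Q(1) by (rule qeval_decides_member_answer_cond[OF valid t])
  have "(\<exists>F'. qeval \<Sigma> F Map.empty Q {#} (F' + {#canon \<Sigma> t#})) \<longleftrightarrow>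
      (\<exists>A'. qeval \<Sigma> F Map.empty Q {#} A' \<and> canon \<Sigma> t \<in># A')"
    by (rule ex_add_single_iff)
  then show "nf_reach (cst_step \<Sigma>) (init_c (answer_cond \<Sigma> Q t) F) (Sat (TT \<Sigma>)) \<longleftrightarrow>
      (\<exists>F'. nf_reach (qst_step \<Sigma>) (init_q Q F) (Ans (F' + {#canon \<Sigma> t#})))"
    unfolding nf_reach_init_c_iff nf_reach_init_q_iff decides_memberD(2)[OF D] by simp
  show "nf_reach (cst_step \<Sigma>) (init_c (answer_cond \<Sigma> Q t) F) (Sat (FF \<Sigma>)) \<longleftrightarrow>
      (\<exists>F'. canon \<Sigma> t \<notin># F' \<and> nf_reach (qst_step \<Sigma>) (init_q Q F) (Ans F'))"
    unfolding nf_reach_init_c_iff nf_reach_init_q_iff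
    using decides_memberD(3)[OF D, of "{#}"] by (simp add: conj_commute)
qed

theorem lemma13:
  fixes \<Sigma> :: "('s,'f,'v) setting" and r :: 'f and ss :: "'s list"
    and Q :: "('f,'v) query" and xs :: "'v list"
  assumes "valid_setting \<Sigma>"
    and "(ss, sFact \<Sigma>) \<in> ranks \<Sigma> r"
    and "wf_query \<Sigma> Q"
    and "distinct xs" and "length xs = length ss"
    and "\<forall>i<length xs. vsort \<Sigma> (xs ! i) = ss ! i"
    and "set xs \<inter> qvars Q = {}"
  shows "\<exists>\<phi>. wf_cond \<Sigma> \<phi> \<and> (qdet \<Sigma> Q \<longrightarrow> cdet \<Sigma> \<phi>) \<and>
    (\<forall>F \<rho> ts. db \<Sigma> F \<and> gsub \<Sigma> \<rho> (dom \<rho>) \<and> finite (dom \<rho>) \<and> dom \<rho> \<inter> set xs = {} \<and>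
       length ts = length ss \<and> (\<forall>i<length ts. ground (ts ! i) \<and> has_sort \<Sigma> (ts ! i) (ss ! i)) \<and>
       qclosed {} (qsubst \<rho> Q) \<longrightarrow>
       cclosed {} (csubst (\<rho>(xs [\<mapsto>] ts)) \<phi>) \<and>
       (nf_reach (cst_step \<Sigma>) (init_c (csubst (\<rho>(xs [\<mapsto>] ts)) \<phi>) F) (Sat (TT \<Sigma>)) \<longleftrightarrow>
          (\<exists>F'. nf_reach (qst_step \<Sigma>) (init_q (qsubst \<rho> Q) F) (Ans (F' + {# canon \<Sigma> (Fn r ts) #})))) \<and>
       (nf_reach (cst_step \<Sigma>) (init_c (csubst (\<rho>(xs [\<mapsto>] ts)) \<phi>) F) (Sat (FF \<Sigma>)) \<longleftrightarrow>
          (\<exists>F'. canon \<Sigma> (Fn r ts) \<notin># F' \<and> nf_reach (qst_step \<Sigma>) (init_q (qsubst \<rho> Q) F) (Ans F'))))"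
proof -
  let ?\<phi> = "answer_cond \<Sigma> Q (Fn r (map Var xs))"
  show ?thesis
  proof (intro exI[of _ ?\<phi>] conjI allI impI)
    have "has_sort \<Sigma> (Fn r (map Var xs)) (sFact \<Sigma>)"
      using assms(1,2,5,6) by (auto intro!: has_sort_FnI has_sort.hs_var simp: leq_refl)
    then show "wf_cond \<Sigma> ?\<phi>" by (rule wf_cond_answer_cond[OF assms(1) _ assms(3)])
    show "qdet \<Sigma> Q \<Longrightarrow> cdet \<Sigma> ?\<phi>" by (rule cdet_answer_cond)
    fix F \<rho> ts
    assume "db \<Sigma> F \<and> gsub \<Sigma> \<rho> (dom \<rho>) \<and> finite (dom \<rho>) \<and> dom \<rho> \<inter> set xs = {} \<and>
       length ts = length ss \<and> (\<forall>i<length ts. ground (ts ! i) \<and> has_sort \<Sigma> (ts ! i) (ss ! i)) \<and>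
       qclosed {} (qsubst \<rho> Q)"
    then have \<rho>: "gsub \<Sigma> \<rho> (dom \<rho>)" "qclosed {} (qsubst \<rho> Q)" and ts: "length ts = length ss"
      "\<forall>i<length ts. ground (ts ! i) \<and> has_sort \<Sigma> (ts ! i) (ss ! i)" by blast+
    have "qsubst (\<rho>(xs [\<mapsto>] ts)) Q = qsubst \<rho> Q"
      using assms(7) by (intro qsubst_cong ballI map_upds_apply_nontin) blast
    then have inst: "csubst (\<rho>(xs [\<mapsto>] ts)) ?\<phi> = answer_cond \<Sigma> (qsubst \<rho> Q) (Fn r ts)"
      using subst_map_upds_Vars[of xs ts \<rho> r] ts(1) assms(4,5) by (simp add: csubst_answer_cond)
    have t: "ground (Fn r ts)" "has_sort \<Sigma> (Fn r ts) (sFact \<Sigma>)"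
      using ts has_sort_FnI[OF assms(1,2)] by (auto simp: in_set_conv_nth)
    have "wf_query \<Sigma> (qsubst \<rho> Q)"
      using \<rho>(1) by (intro wf_query_subst[OF assms(1) _ assms(3)]) (simp add: gsub_def)
    note correct = answer_cond_correct[OF assms(1) t this \<rho>(2)]
    show "cclosed {} (csubst (\<rho>(xs [\<mapsto>] ts)) ?\<phi>)"
      unfolding inst by (rule correct(1))
    show "nf_reach (cst_step \<Sigma>) (init_c (csubst (\<rho>(xs [\<mapsto>] ts)) ?\<phi>) F) (Sat (TT \<Sigma>)) \<longleftrightarrow>
        (\<exists>F'. nf_reach (qst_step \<Sigma>) (init_q (qsubst \<rho> Q) F) (Ans (F' + {#canon \<Sigma> (Fn r ts)#})))"
      unfolding inst by (rule correct(2))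
    show "nf_reach (cst_step \<Sigma>) (init_c (csubst (\<rho>(xs [\<mapsto>] ts)) ?\<phi>) F) (Sat (FF \<Sigma>)) \<longleftrightarrow>
        (\<exists>F'. canon \<Sigma> (Fn r ts) \<notin># F' \<and> nf_reach (qst_step \<Sigma>) (init_q (qsubst \<rho> Q) F) (Ans F'))"
      unfolding inst by (rule correct(3))
  qed
qed

end
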